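(* Let $m \geq 0$, $n \geq 1$ be integers and let $c = (c^t; c^b)$ be a sorted deterministically recurrent configuration on $K_{m,n}^0$. Run the following algorithm: let $T$ be the stack $(c^t_1, \ldots, c^t_m, n-1)$ and $B$ the stack $(c^b_1, \ldots, c^b_n)$, each with head its first (smallest) element, and let $w$ be the empty word. While both $T$ and $B$ are non-empty: (a) while $\mathrm{head}(T) > 0$ and $\mathrm{head}(B) > 0$, append $U$ to $w$ and decrease every entry of $T$ and of $B$ by $1$; (b) then, if $0 = \mathrm{head}(T) < \mathrm{head}(B)$, remove the head of $T$, append $H^E$ to $w$, and decrease every entry of $B$ by $1$; else if $0 = \mathrm{head}(B) < \mathrm{head}(T)$, remove the head of $B$, append $H^N$ to $w$, and decrease every entry of $T$ by $1$; else (both heads equal $0$) remove the heads of both $T$ and $B$ and append $D$ to $w$. After the loop, delete the final step (a $D$) of $w$ and output the resulting word $w(c)$. Then $w(c) = \Xi(\Phi(c))$; that is, $c \mapsto w(c)$ is the bijection $\Xi \circ \Phi$ from sorted deterministically recurrent configurations on $K_{m,n}^0$ to $\mathrm{Motz}_{m,n-1}$. Moreover, $\mathrm{level}(c) = \mathrm{Area}(w(c))$.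
   Context: $K_{m,n}^0$ is the complete bipartite graph with "top" vertices $v^t_0, \ldots, v^t_m$ and "bottom" vertices $v^b_1, \ldots, v^b_n$, with an edge between every top and every bottom vertex; $v^t_0$ is the sink. A configuration is a vector $c = (c^t_1, \ldots, c^t_m; c^b_1, \ldots, c^b_n)$ of non-negative integers; it is sorted if $c^t$, $c^b$ are weakly increasing, stable if $c^t_i < n$ and $c^b_j < m+1$ for all $i,j$. Abelian sandpile model (ASM): an unstable non-sink vertex topples by sending one grain to each neighbour (bottom vertices also to the sink); grains sent to the sink disappear. In the Markov chain on stable configurations which adds a grain to a uniformly random non-sink vertex and stabilises by the ASM, a stable configuration is deterministically recurrent if it is a recurrent state. The level is $\mathrm{level}(c) := \sum_i c^t_i + \sum_j c^b_j - mn$. Labelled Motzkin paths: words in steps $U=(1,1)$, $D=(1,-1)$ and horizontal steps $H^N, H^E$ (both $=(1,0)$), starting and ending at height $0$ and never going below the $x$-axis; $\mathrm{Area}(w)$ is the area between the path and the $x$-axis. $\mathrm{Motz}_{m,n-1}$ is the set of such paths with $m+n-1$ steps, exactly $m$ of which are $U$ or $H^E$. A parallelogram polyomino in the box $[0,m+1]\times[0,n]$ is the set of unit cells between two lattice paths $\mathcal{U}$ (upper) and $\mathcal{L}$ (lower) from $(0,0)$ to $(m+1,n)$ with steps $N=(0,1)$, $E=(1,0)$, meeting only at their endpoints; necessarily $\mathcal{U} = (N, u_1, \ldots, u_{m+n-1}, E)$ and $\mathcal{L} = (E, \ell_1, \ldots, \ell_{m+n-1}, N)$. The map $\Xi$ sends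 such a polyomino to $w_1 \cdots w_{m+n-1}$ with $w_i = U$ if $(u_i,\ell_i) = (N,E)$, $w_i = H^N$ if $(u_i,\ell_i)=(N,N)$, $w_i = H^E$ if $(u_i,\ell_i) = (E,E)$, $w_i = D$ if $(u_i,\ell_i) = (E,N)$; it is known to be a bijection onto $\mathrm{Motz}_{m,n-1}$. The Dukes–Le Borgne map $\Phi$: for a sorted stable $c$, $\mathcal{U}(c^t)$ is the path from $(0,0)$ to $(m+1,n)$ whose $E$ steps occur at heights $1+c^t_1, \ldots, 1+c^t_m, n$, and $\mathcal{L}(c^b)$ the path from $(0,0)$ to $(m+1,n)$ whose $N$ steps occur at $x$-coordinates $1+c^b_1, \ldots, 1+c^b_n$; $\Phi(c)$ is the polyomino between them. It is known that $\Phi$ is a bijection from sorted deterministically recurrent configurations on $K_{m,n}^0$ to parallelogram polyominoes in $[0,m+1]\times[0,n]$. *)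

theory Defs
  imports Complex_Main
begin

text \<open>A configuration c = (c^t; c^b) is a pair of lists: fst c = [c^t_1,...,c^t_m]
  (top non-sink vertices), snd c = [c^b_1,...,c^b_n] (bottom vertices).
  The sink v^t_0 carries no grains.\<close>

type_synonym config = "nat list \<times> nat list"

definition wf_config :: "nat \<Rightarrow> nat \<Rightarrow> config \<Rightarrow> bool" where
  "wf_config m n c \<longleftrightarrow> length (fst c) = m \<and> length (snd c) = n"

definition stable :: "nat \<Rightarrow> nat \<Rightarrow> config \<Rightarrow> bool" where
  "stable m n c \<longleftrightarrow> wf_config m n c \<and> (\<forall>i<m. fst c ! i < n) \<and> (\<forall>j<n. snd c ! j < m + 1)"

definition sorted_config :: "config \<Rightarrow> bool" where
  "sorted_config c \<longleftrightarrow> sorted (fst c) \<and> sorted (snd c)"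

text \<open>A top vertex has degree n
  (all bottom vertices); a bottom vertex has degree m+1 (all top vertices incl. the sink);
  grains sent to the sink disappear.\<close>

inductive topple :: "nat \<Rightarrow> nat \<Rightarrow> config \<Rightarrow> config \<Rightarrow> bool" for m n where
  top: "\<lbrakk> i < m; n \<le> ct ! i \<rbrakk> \<Longrightarrow>
        topple m n (ct, cb) (ct[i := ct ! i - n], map Suc cb)"
| bot: "\<lbrakk> j < n; m + 1 \<le> cb ! j \<rbrakk> \<Longrightarrow>
        topple m n (ct, cb) (map Suc ct, cb[j := cb ! j - (m + 1)])"

definition stabilises :: "nat \<Rightarrow> nat \<Rightarrow> config \<Rightarrow> config \<Rightarrow> bool" where
  "stabilises m n c d \<longleftrightarrow> (topple m n)\<^sup>*\<^sup>* c d \<and> stable m n d"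

text \<open>Positive-probability transitions of the Markov chain on stable configurations:
  add a grain to some non-sink vertex and stabilise.\<close>

definition chain_step :: "nat \<Rightarrow> nat \<Rightarrow> config \<Rightarrow> config \<Rightarrow> bool" where
  "chain_step m n c d \<longleftrightarrow> stable m n c \<and>
     ((\<exists>i<m. stabilises m n ((fst c)[i := fst c ! i + 1], snd c) d) \<or>
      (\<exists>j<n. stabilises m n (fst c, (snd c)[j := snd c ! j + 1]) d))"

text \<open>Recurrent state of the (finite) Markov chain: every state reachable from c can reach c back.\<close>

definition det_recurrent :: "nat \<Rightarrow> nat \<Rightarrow> config \<Rightarrow> bool" where
  "det_recurrent m n c \<longleftrightarrow> stable m n c \<and>
     (\<forall>d. (chain_step m n)\<^sup>*\<^sup>* c d \<longrightarrow> (chain_step m n)\<^sup>*\<^sup>* d c)"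

definition sorted_recurrent :: "nat \<Rightarrow> nat \<Rightarrow> config set" where
  "sorted_recurrent m n = {c. sorted_config c \<and> det_recurrent m n c}"

definition level :: "nat \<Rightarrow> nat \<Rightarrow> config \<Rightarrow> int" where
  "level m n c = int (sum_list (fst c) + sum_list (snd c)) - int (m * n)"

datatype mstep = U | D | HN | HE

fun delta :: "mstep \<Rightarrow> int" where
  "delta U = 1" | "delta D = -1" | "delta HN = 0" | "delta HE = 0"

definition height :: "mstep list \<Rightarrow> int" where
  "height w = sum_list (map delta w)"

definition is_motzkin :: "mstep list \<Rightarrow> bool" where
  "is_motzkin w \<longleftrightarrow> height w = 0 \<and> (\<forall>i\<le>length w. height (take i w) \<ge> 0)"

definition Motz :: "nat \<Rightarrow> nat \<Rightarrow> mstep list set" where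
  "Motz m k = {w. is_motzkin w \<and> length w = m + k \<and>
                  length (filter (\<lambda>s. s = U \<or> s = HE) w) = m}"

text \<open>Area between the path and the x-axis: each step contributes the trapezoid
  under it.\<close>

definition Area :: "mstep list \<Rightarrow> real" where
  "Area w = (\<Sum>i<length w. (of_int (height (take i w)) + of_int (height (take (Suc i) w))) / 2)"

definition dec :: "nat list \<Rightarrow> nat list" where
  "dec xs = map (\<lambda>x. x - 1) xs"

function alg :: "nat list \<Rightarrow> nat list \<Rightarrow> mstep list" where
  "alg [] B = []"
| "alg (t # T) [] = []"
| "alg (t # T) (b # B) =
     (if 0 < t \<and> 0 < b then U # alg (dec (t # T)) (dec (b # B))
      else if t = 0 \<and> 0 < b then HE # alg T (dec (b # B))
      else if b = 0 \<and> 0 < t then HN # alg (dec (t # T)) B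
      else D # alg T B)"
  by pat_completeness auto
termination
  by (relation "measures [\<lambda>(T, B). length T + length B, \<lambda>(T, B). hd T]")
     (auto simp: dec_def)

definition wc :: "nat \<Rightarrow> nat \<Rightarrow> config \<Rightarrow> mstep list" where
  "wc m n c = butlast (alg (fst c @ [n - 1]) (snd c))"

datatype lstep = N | E

text \<open>Lattice path from coordinate cur (in the direction of s) whose t-steps occur at the
  given successive s-coordinates, then completed by s-steps up to tot.\<close>

fun path_at :: "lstep \<Rightarrow> lstep \<Rightarrow> nat \<Rightarrow> nat list \<Rightarrow> nat \<Rightarrow> lstep list" where
  "path_at s t cur [] tot = replicate (tot - cur) s"
| "path_at s t cur (h # hs) tot = replicate (h - cur) s @ t # path_at s t h hs tot"

text \<open>A parallelogram polyomino is represented by its pair of boundary paths (upper, lower).\<close>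

definition upper_path :: "nat \<Rightarrow> nat list \<Rightarrow> lstep list" where
  "upper_path n ct = path_at N E 0 (map Suc ct @ [n]) n"

definition lower_path :: "nat \<Rightarrow> nat list \<Rightarrow> lstep list" where
  "lower_path m cb = path_at E N 0 (map Suc cb) (m + 1)"

definition Phi :: "nat \<Rightarrow> nat \<Rightarrow> config \<Rightarrow> lstep list \<times> lstep list" where
  "Phi m n c = (upper_path n (fst c), lower_path m (snd c))"

fun xi_step :: "lstep \<times> lstep \<Rightarrow> mstep" where
  "xi_step (N, E) = U"
| "xi_step (N, N) = HN"
| "xi_step (E, E) = HE"
| "xi_step (E, N) = D"

text \<open>\<Xi>: with upper path (N, u_1..u_{m+n-1}, E) and lower path (E, l_1..l_{m+n-1}, N).\<close>

definition Xi :: "lstep list \<times> lstep list \<Rightarrow> mstep list" where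
  "Xi P = map xi_step (zip (butlast (tl (fst P))) (butlast (tl (snd P))))"

end

(*
  The algorithm reads the stacks T = (c^t_1, ..., c^t_m, n - 1) and B = c^b off as two words:
  in walk N E T the k-th step E is preceded by exactly T_k steps N, and in walk E N B the k-th
  step N by exactly B_k steps E. These are the boundary paths of Phi(c) without their first and
  last steps, so w(c) = Xi(Phi(c)) is bookkeeping; level(c) = Area(w(c)) follows from a quadratic
  invariant of the algorithm which changes at each step by the area under that step.

  For the bijection, a stable configuration is recurrent iff it has no forbidden
  subconfiguration: sets I, J of top and bottom vertices, not both empty, in which every vertex
  has fewer grains than neighbours in I and J (Dhar's criterion: forbidden subconfigurations
  cannot be created by adding grains or toppling, and without them the burning algorithm,
  together with the abelian property, leads from the maximal stable configuration back to c).
  For sorted c it suffices to test initial segments I = {..<a}, J = {..<b}, and this is exactly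
  the condition that no prefix of w(c) goes below the axis. The inverse map reads the stacks
  back off the two paths determined by w.
*)

theory Submission
  imports Defs "HOL-Library.Confluence"
begin

section \<open>Words read off a stack\<close>

lemma length_dec [simp]: "length (dec xs) = length xs"
  by (simp add: dec_def)

lemma dec_eq_Nil_iff [simp]: "dec xs = [] \<longleftrightarrow> xs = []"
  by (simp add: dec_def)

lemma sorted_dec: "sorted xs \<Longrightarrow> sorted (dec xs)"
  unfolding dec_def by (induction xs) auto

lemma dec_map_diff: "dec (map (\<lambda>y. y - d) xs) = map (\<lambda>y. y - Suc d) xs"
  by (simp add: dec_def)

lemma sum_list_dec:
  "\<forall>x\<in>set xs. 0 < x \<Longrightarrow> int (sum_list (dec xs)) = int (sum_list xs) - int (length xs)"
  unfolding dec_def by (induction xs) auto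

text \<open>The word that \<open>alg\<close> reads off a single stack. For sorted \<open>T\<close>, the \<open>k\<close>-th
  \<open>b\<close>-step is preceded by exactly \<open>T ! k\<close> steps \<open>a\<close>.\<close>

function walk :: "lstep \<Rightarrow> lstep \<Rightarrow> nat list \<Rightarrow> lstep list" where
  "walk a b [] = []"
| "walk a b (t # T) = (if t = 0 then b # walk a b T else a # walk a b (dec (t # T)))"
  by pat_completeness auto
termination
  by (relation "measures [\<lambda>(a, b, T). length T, \<lambda>(a, b, T). hd T]") (auto simp: dec_def)

declare walk.simps(2) [simp del]

lemma walk_Cons_0 [simp]: "walk a b (0 # T) = b # walk a b T"
  by (simp add: walk.simps)

lemma walk_Cons_pos: "0 < t \<Longrightarrow> walk a b (t # T) = a # walk a b (dec (t # T))"
  by (simp add: walk.simps)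

lemma alg_eq_map_xi_step_walks: "alg T B = map xi_step (zip (walk N E T) (walk E N B))"
  by (induction T B rule: alg.induct) (auto simp: walk_Cons_pos)

lemma walk_shifted_Cons:
  "d \<le> x \<Longrightarrow> walk a b (map (\<lambda>y. y - d) (x # xs))
     = replicate (x - d) a @ b # walk a b (map (\<lambda>y. y - x) xs)"
proof (induction "x - d" arbitrary: d)
  case 0
  then show ?case by simp
next
  case (Suc k)
  then have "walk a b (map (\<lambda>y. y - d) (x # xs)) = a # walk a b (map (\<lambda>y. y - Suc d) (x # xs))"
    using walk_Cons_pos[of "x - d" a b] dec_map_diff[of d "x # xs"] by simp
  also have "\<dots> = a # replicate (x - Suc d) a @ b # walk a b (map (\<lambda>y. y - x) xs)"
    using Suc by simp
  finally show ?case
    using Suc(2) by (simp add: replicate_app_Cons_same Suc_diff_Suc[symmetric])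
qed

lemma walk_Cons: "walk a b (x # xs) = replicate x a @ b # walk a b (map (\<lambda>y. y - x) xs)"
  using walk_shifted_Cons[of 0 x a b xs] by simp

lemma path_at_eq_walk:
  "sorted xs \<Longrightarrow> \<forall>x\<in>set xs. d \<le> x \<Longrightarrow>
   path_at a b (Suc d) (map Suc xs) tot
     = walk a b (map (\<lambda>x. x - d) xs) @ replicate (tot - Suc (last (d # xs))) a"
proof (induction xs arbitrary: d)
  case (Cons x xs)
  have "path_at a b (Suc d) (map Suc (x # xs)) tot
      = replicate (x - d) a @ b # path_at a b (Suc x) (map Suc xs) tot"
    by simp
  also have "path_at a b (Suc x) (map Suc xs) tot
      = walk a b (map (\<lambda>y. y - x) xs) @ replicate (tot - Suc (last (x # xs))) a"
    using Cons by auto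
  finally show ?case
    using walk_shifted_Cons[of d x a b xs] Cons(3) by simp
qed simp

lemma path_at_0_eq_walk:
  assumes "sorted xs" "xs \<noteq> []"
  shows "path_at a b 0 (map Suc xs) tot = a # walk a b xs @ replicate (tot - Suc (last xs)) a"
proof -
  obtain x xs' where xs: "xs = x # xs'"
    using assms(2) by (cases xs) auto
  have "path_at a b 0 (map Suc xs) tot
      = replicate (Suc x) a @ b # path_at a b (Suc x) (map Suc xs') tot"
    using xs by simp
  also have "path_at a b (Suc x) (map Suc xs') tot
      = walk a b (map (\<lambda>y. y - x) xs') @ replicate (tot - Suc (last (x # xs'))) a"
    using assms(1) xs by (intro path_at_eq_walk) auto
  finally show ?thesis
    using walk_Cons[of a b x xs'] xs by simp
qed

lemma set_walk: "set (walk a b T) \<subseteq> {a, b}"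
  by (induction a b T rule: walk.induct) (auto simp: walk.simps(2))

lemma walk_eq_Nil_iff [simp]: "walk a b T = [] \<longleftrightarrow> T = []"
  by (cases T) (auto simp: walk.simps(2))

lemma last_walk: "T \<noteq> [] \<Longrightarrow> last (walk a b T) = b"
  by (induction a b T rule: walk.induct) (auto simp: walk.simps(2))

lemma count_walk_b: "a \<noteq> b \<Longrightarrow> count_list (walk a b T) b = length T"
proof (induction a b T rule: walk.induct)
  case (2 a b t T)
  then show ?case by (cases "t = 0") (auto simp: walk_Cons_pos)
qed simp

lemma count_walk_a:
  "a \<noteq> b \<Longrightarrow> sorted T \<Longrightarrow> T \<noteq> [] \<Longrightarrow> count_list (walk a b T) a = last T"
proof (induction a b T rule: walk.induct)
  case (2 a b t T)
  show ?case
  proof (cases "t = 0")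
    case True
    then show ?thesis using 2 by (cases T) auto
  next
    case False
    have "sorted (dec (t # T))"
      using 2(4) by (rule sorted_dec)
    then have "count_list (walk a b (dec (t # T))) a = last (dec (t # T))"
      using 2 False by (simp add: dec_def)
    moreover have "T \<noteq> [] \<Longrightarrow> 0 < last T"
      using 2(4) False last_in_set by fastforce
    ultimately show ?thesis
      using False 2 by (cases "T = []") (auto simp: walk_Cons_pos dec_def last_map)
  qed
qed simp

lemma length_walk:
  assumes "a \<noteq> b" "sorted T" "T \<noteq> []"
  shows "length (walk a b T) = length T + last T"
proof -
  have "length (walk a b T) = count_list (walk a b T) a + count_list (walk a b T) b"
    using sum_count_set[OF set_walk, of a b T] assms(1) by simp
  then show ?thesis
    using count_walk_a[OF assms] count_walk_b[OF assms(1)] by simp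
qed

fun counts_before :: "lstep \<Rightarrow> lstep list \<Rightarrow> nat list" where
  "counts_before b [] = []"
| "counts_before b (x # s) = (if x = b then 0 # counts_before b s else map Suc (counts_before b s))"

lemma length_counts_before: "length (counts_before b s) = count_list s b"
  by (induction s) simp_all

lemma counts_before_eq_Nil_iff [simp]: "counts_before b s = [] \<longleftrightarrow> b \<notin> set s"
  by (induction s) auto

lemma sorted_counts_before: "sorted (counts_before b s)"
  by (induction s) (auto simp: sorted_map)

lemma counts_before_walk: "a \<noteq> b \<Longrightarrow> sorted T \<Longrightarrow> counts_before b (walk a b T) = T"
proof (induction a b T rule: walk.induct)
  case (2 a b t T)
  show ?case
  proof (cases "t = 0")
    case True
    then show ?thesis using 2 by auto
  next
    case False
    have "sorted (dec (t # T))"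
      using 2(4) by (rule sorted_dec)
    then have "counts_before b (walk a b (dec (t # T))) = dec (t # T)"
      using 2 False by simp
    moreover have "\<forall>x\<in>set T. t \<le> x"
      using 2(4) by auto
    ultimately show ?thesis
      using False 2(3) by (auto simp: walk_Cons_pos dec_def intro!: map_idI)
  qed
qed simp

lemma walk_counts_before:
  "a \<noteq> b \<Longrightarrow> set s \<subseteq> {a, b} \<Longrightarrow> s \<noteq> [] \<Longrightarrow> last s = b \<Longrightarrow> walk a b (counts_before b s) = s"
proof (induction s)
  case (Cons x s)
  show ?case
  proof (cases "x = b")
    case True
    then show ?thesis using Cons by (cases "s = []") auto
  next
    case False
    then have "x = a" "s \<noteq> []"
      using Cons.prems by auto
    then have "b \<in> set s"
      using Cons.prems(4) last_in_set by fastforce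
    then obtain p ps where p: "counts_before b s = p # ps"
      by (cases "counts_before b s") auto
    have "walk a b (map Suc (counts_before b s)) = a # walk a b (dec (map Suc (counts_before b s)))"
      using p by (simp add: walk_Cons_pos)
    also have "dec (map Suc (counts_before b s)) = counts_before b s"
      by (simp add: dec_def comp_def)
    finally show ?thesis
      using Cons \<open>x = a\<close> \<open>s \<noteq> []\<close> False by simp
  qed
qed simp

lemma last_counts_before:
  assumes "a \<noteq> b" "set s \<subseteq> {a, b}" "s \<noteq> []" "last s = b"
  shows "last (counts_before b s) = length s - count_list s b"
proof -
  have ne: "counts_before b s \<noteq> []"
    using assms(3,4) last_in_set[of s] by auto
  have "last (counts_before b s) = count_list s a"
    using count_walk_a[OF assms(1) sorted_counts_before ne] walk_counts_before[OF assms] by simp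
  moreover have "length s = count_list s a + count_list s b"
    using sum_count_set[OF assms(2)] assms(1) by simp
  ultimately show ?thesis by simp
qed

lemma counts_before_le:
  assumes "a \<noteq> b" "set s \<subseteq> {a, b}" "s \<noteq> []" "last s = b" "x \<in> set (counts_before b s)"
  shows "x \<le> length s - count_list s b"
proof -
  have "x \<le> last (counts_before b s)"
    using assms(5) sorted_counts_before[of b s]
    by (cases "counts_before b s" rule: rev_cases) (auto simp: sorted_append)
  then show ?thesis
    using last_counts_before[OF assms(1-4)] by simp
qed

text \<open>\<open>x + L ! x\<close> is the position of the \<open>x\<close>-th \<open>b\<close>-step in \<open>walk a b L\<close>.\<close>

definition arrivals :: "nat list \<Rightarrow> nat \<Rightarrow> nat" where
  "arrivals L k = card {x. x < length L \<and> x + L ! x < k}"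

lemma finite_arrivals_set: "finite {x. x < length L \<and> x + L ! x < k}"
  by (rule finite_subset[of _ "{..<length L}"]) auto

lemma arrivals_le_length: "arrivals L k \<le> length L"
proof -
  have "{x. x < length L \<and> x + L ! x < k} \<subseteq> {..<length L}"
    by auto
  from card_mono[OF finite_lessThan this] show ?thesis
    unfolding arrivals_def by simp
qed
lemma arrivals_0 [simp]: "arrivals L 0 = 0"
  by (simp add: arrivals_def)

lemma arrivals_Cons_0_Suc: "arrivals (0 # T) (Suc k) = Suc (arrivals T k)"
proof -
  have "{x. x < length (0 # T) \<and> x + (0 # T) ! x < Suc k}
      = insert 0 (Suc ` {x. x < length T \<and> x + T ! x < k})"
  proof (intro equalityI subsetI)
    fix x assume "x \<in> {x. x < length (0 # T) \<and> x + (0 # T) ! x < Suc k}"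
    then show "x \<in> insert 0 (Suc ` {x. x < length T \<and> x + T ! x < k})"
      by (cases x) auto
  qed auto
  then show ?thesis
    unfolding arrivals_def by (simp add: card_image)
qed

lemma arrivals_dec:
  assumes "\<forall>x\<in>set L. 0 < x"
  shows "arrivals (dec L) k = arrivals L (Suc k)"
proof -
  have "x < length L \<and> x + map (\<lambda>x. x - 1) L ! x < k \<longleftrightarrow> x < length L \<and> x + L ! x < Suc k"
    for x
  proof (cases "x < length L")
    case True
    then have "0 < L ! x"
      using assms by simp
    then show ?thesis
      using True by (simp add: less_Suc_eq_le Suc_le_eq[symmetric])
  qed simp
  then show ?thesis
    by (simp only: arrivals_def dec_def length_map)
qed

lemma count_take_walk:
  "a \<noteq> b \<Longrightarrow> sorted T \<Longrightarrow> count_list (take k (walk a b T)) b = arrivals T k"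
proof (induction a b T arbitrary: k rule: walk.induct)
  case (1 a b)
  then show ?case by (simp add: arrivals_def)
next
  case (2 a b t T)
  show ?case
  proof (cases k)
    case (Suc k')
    show ?thesis
    proof (cases "t = 0")
      case True
      then show ?thesis using 2 Suc by (simp add: arrivals_Cons_0_Suc)
    next
      case False
      have "sorted (dec (t # T))"
        using 2(4) by (rule sorted_dec)
      moreover have "\<forall>x\<in>set (t # T). 0 < x"
        using 2(4) False by auto
      ultimately show ?thesis
        using 2 Suc False by (simp add: walk_Cons_pos arrivals_dec)
    qed
  qed simp
qed

lemma le_arrivals:
  assumes "sorted L" "0 < a" "a \<le> length L" "a - 1 + L ! (a - 1) < k"
  shows "a \<le> arrivals L k"
proof -
  have "{..<a} \<subseteq> {x. x < length L \<and> x + L ! x < k}"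
  proof
    fix x assume "x \<in> {..<a}"
    then have "L ! x \<le> L ! (a - 1)"
      using assms(1,3) by (intro sorted_nth_mono) auto
    then show "x \<in> {x. x < length L \<and> x + L ! x < k}"
      using \<open>x \<in> {..<a}\<close> assms(3,4) by auto
  qed
  from card_mono[OF finite_arrivals_set this] show ?thesis
    unfolding arrivals_def by simp
qed

lemma arrivals_last:
  assumes "sorted L" "0 < arrivals L k"
  shows "arrivals L k - 1 + L ! (arrivals L k - 1) < k"
proof -
  define S where "S = {x. x < length L \<and> x + L ! x < k}"
  have fin: "finite S"
    unfolding S_def by (rule finite_arrivals_set)
  have "S \<noteq> {}"
    using assms(2) unfolding arrivals_def S_def[symmetric] by auto
  then have "Max S \<in> S"
    using fin by simp
  then have max: "Max S < length L" "Max S + L ! Max S < k"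
    unfolding S_def by auto
  have le: "arrivals L k - 1 \<le> Max S"
    using card_le_Suc_Max[OF fin] unfolding arrivals_def S_def[symmetric] by simp
  have "L ! (arrivals L k - 1) \<le> L ! Max S"
    using sorted_nth_mono[OF assms(1) le max(1)] .
  then show ?thesis
    using le max(2) by linarith
qed

section \<open>Heights and areas\<close>

lemma height_Nil [simp]: "height [] = 0"
  by (simp add: height_def)

lemma height_Cons [simp]: "height (s # w) = delta s + height w"
  by (simp add: height_def)

lemma height_append [simp]: "height (v @ w) = height v + height w"
  by (simp add: height_def)

lemma height_map_xi_step_zip:
  "length xs = length ys \<Longrightarrow>
   height (map xi_step (zip xs ys)) = int (count_list xs N) - int (count_list ys N)"
proof (induction xs ys rule: list_induct2)
  case (Cons x xs y ys)
  then show ?case by (cases x; cases y) auto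
qed simp

fun double_area_from :: "int \<Rightarrow> mstep list \<Rightarrow> int" where
  "double_area_from h [] = 0"
| "double_area_from h (s # w) = 2 * h + delta s + double_area_from (h + delta s) w"

lemma double_area_from_snoc:
  "double_area_from h (w @ [s]) = double_area_from h w + 2 * (h + height w) + delta s"
  by (induction w arbitrary: h) (auto simp: algebra_simps)

lemma sum_heights_eq_double_area_from:
  "(\<Sum>i<length w. of_int (h + height (take i w)) + of_int (h + height (take (Suc i) w)) :: real)
     = of_int (double_area_from h w)"
proof (induction w arbitrary: h)
  case (Cons s w)
  have "(\<Sum>i<length (s # w). of_int (h + height (take i (s # w)))
          + of_int (h + height (take (Suc i) (s # w))) :: real)
      = of_int h + of_int (h + delta s)
        + (\<Sum>i<length w. of_int ((h + delta s) + height (take i w))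
          + of_int ((h + delta s) + height (take (Suc i) w)))"
    by (simp only: length_Cons sum.lessThan_Suc_shift) (simp add: algebra_simps)
  then show ?case
    using Cons[of "h + delta s"] by simp
qed simp

lemma Area_eq_double_area_from: "Area w = of_int (double_area_from 0 w) / 2"
  using sum_heights_eq_double_area_from[where h = 0 and w = w]
  unfolding Area_def sum_divide_distrib[symmetric] by simp

text \<open>Closed form of twice the area enclosed by \<open>alg T B\<close> from height \<open>h\<close>: each step of
  \<open>alg\<close> changes it by exactly twice the area under that step.\<close>

definition area_potential :: "int \<Rightarrow> nat list \<Rightarrow> nat list \<Rightarrow> int" where
  "area_potential h T B = 2 * (int (sum_list T) + int (sum_list B))
     - 2 * int (length T) * int (length B) + 2 * h * (int (length T) + int (length B)) - h\<^sup>2 + 1"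

lemma area_potential_U:
  "\<forall>x\<in>set T. 0 < x \<Longrightarrow> \<forall>x\<in>set B. 0 < x \<Longrightarrow>
   area_potential h T B = 2 * h + 1 + area_potential (h + 1) (dec T) (dec B)"
  by (simp add: area_potential_def sum_list_dec algebra_simps power2_eq_square)

lemma area_potential_HE:
  "\<forall>x\<in>set B. 0 < x \<Longrightarrow> area_potential h (0 # T) B = 2 * h + area_potential h T (dec B)"
  by (simp add: area_potential_def sum_list_dec algebra_simps)

lemma area_potential_HN:
  "\<forall>x\<in>set T. 0 < x \<Longrightarrow> area_potential h T (0 # B) = 2 * h + area_potential h (dec T) B"
  by (simp add: area_potential_def sum_list_dec algebra_simps)

lemma area_potential_D:
  "area_potential h (0 # T) (0 # B) = 2 * h - 1 + area_potential (h - 1) T B"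
  by (simp add: area_potential_def algebra_simps power2_eq_square)

lemma double_area_alg:
  "sorted T \<Longrightarrow> sorted B \<Longrightarrow> length (walk N E T) = length (walk E N B) \<Longrightarrow>
   h + int (count_list (walk N E T) N) - int (count_list (walk E N B) N) = -1 \<Longrightarrow>
   double_area_from h (alg T B) = area_potential h T B"
proof (induction T B arbitrary: h rule: alg.induct)
  case (1 B)
  then show ?case by (simp add: area_potential_def)
next
  case (2 t T)
  then show ?case by simp
next
  case (3 t T b B)
  have pos_T: "0 < t \<Longrightarrow> \<forall>x\<in>set (t # T). 0 < x" and pos_B: "0 < b \<Longrightarrow> \<forall>x\<in>set (b # B). 0 < x"
    using "3.prems"(1,2) by auto
  have sorted: "sorted T" "sorted B" "sorted (dec (t # T))" "sorted (dec (b # B))"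
    using "3.prems"(1,2) sorted_dec by auto
  consider "0 < t" "0 < b" | "t = 0" "0 < b" | "0 < t" "b = 0" | "t = 0" "b = 0"
    by linarith
  then show ?case
  proof cases
    case 1
    then show ?thesis
      using "3.IH"(1)[of "h + 1"] "3.prems" sorted pos_T pos_B
      by (simp add: walk_Cons_pos area_potential_U)
  next
    case 2
    then show ?thesis
      using "3.IH"(2)[of h] "3.prems" sorted pos_B
      by (simp add: walk_Cons_pos area_potential_HE)
  next
    case 3
    then show ?thesis
      using "3.IH"(3)[of h] "3.prems" sorted pos_T
      by (simp add: walk_Cons_pos area_potential_HN)
  next
    case 4
    then show ?thesis
      using "3.IH"(4)[of "h - 1"] "3.prems" sorted
      by (simp add: area_potential_D)
  qed
qed

section \<open>Toppling and stabilisation\<close>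

lemma stable_imp_wf_config: "stable m n c \<Longrightarrow> wf_config m n c"
  by (simp add: stable_def)

lemma topple_topI:
  "i < m \<Longrightarrow> n \<le> ct ! i \<Longrightarrow> d = (ct[i := ct ! i - n], map Suc cb) \<Longrightarrow> topple m n (ct, cb) d"
  using topple.top by blast

lemma topple_botI:
  "j < n \<Longrightarrow> m + 1 \<le> cb ! j \<Longrightarrow> d = (map Suc ct, cb[j := cb ! j - (m + 1)]) \<Longrightarrow>
   topple m n (ct, cb) d"
  using topple.bot by blast

lemma wf_config_topple: "topple m n c d \<Longrightarrow> wf_config m n c \<Longrightarrow> wf_config m n d"
  by (induction rule: topple.induct) (auto simp: wf_config_def)

lemma wf_config_topples: "(topple m n)\<^sup>*\<^sup>* c d \<Longrightarrow> wf_config m n c \<Longrightarrow> wf_config m n d"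
  by (induction rule: rtranclp_induct) (auto intro: wf_config_topple)

lemma stable_no_topple: "stable m n c \<Longrightarrow> \<not> topple m n c d"
  by (auto simp: stable_def elim!: topple.cases)

lemma stable_topples_eq: "stable m n c \<Longrightarrow> (topple m n)\<^sup>*\<^sup>* c d \<Longrightarrow> d = c"
  by (erule converse_rtranclpE) (auto dest: stable_no_topple)

text \<open>Non-sink vertices are encoded as \<open>Inl i\<close> for \<open>v\<^sup>t\<^sub>i\<^sub>+\<^sub>1\<close> and \<open>Inr j\<close> for \<open>v\<^sup>b\<^sub>j\<^sub>+\<^sub>1\<close>.\<close>

fun is_vertex :: "nat \<Rightarrow> nat \<Rightarrow> nat + nat \<Rightarrow> bool" where
  "is_vertex m n (Inl i) \<longleftrightarrow> i < m"
| "is_vertex m n (Inr j) \<longleftrightarrow> j < n"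

fun add_grain :: "nat + nat \<Rightarrow> config \<Rightarrow> config" where
  "add_grain (Inl i) c = ((fst c)[i := fst c ! i + 1], snd c)"
| "add_grain (Inr j) c = (fst c, (snd c)[j := snd c ! j + 1])"

lemma wf_config_add_grain: "wf_config m n c \<Longrightarrow> wf_config m n (add_grain v c)"
  by (cases v) (auto simp: wf_config_def)

lemma wf_config_fold_add_grain: "wf_config m n c \<Longrightarrow> wf_config m n (fold add_grain vs c)"
  by (induction vs arbitrary: c) (auto simp: wf_config_add_grain)

lemma chain_step_iff:
  "chain_step m n c d \<longleftrightarrow> stable m n c \<and> (\<exists>v. is_vertex m n v \<and> stabilises m n (add_grain v c) d)"
proof
  assume "chain_step m n c d"
  then show "stable m n c \<and> (\<exists>v. is_vertex m n v \<and> stabilises m n (add_grain v c) d)"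
    unfolding chain_step_def by (metis add_grain.simps is_vertex.simps)
next
  assume "stable m n c \<and> (\<exists>v. is_vertex m n v \<and> stabilises m n (add_grain v c) d)"
  then obtain v where "stable m n c" "is_vertex m n v" "stabilises m n (add_grain v c) d"
    by blast
  then show "chain_step m n c d"
    unfolding chain_step_def by (cases v) auto
qed

lemma topple_add_grain:
  assumes "topple m n c d" "wf_config m n c" "is_vertex m n v"
  shows "topple m n (add_grain v c) (add_grain v d)"
  using assms
proof (induction rule: topple.induct)
  case (top i ct cb)
  show ?case
  proof (cases v)
    case (Inl a)
    then show ?thesis
      using top by (cases "a = i")
        (auto simp: wf_config_def list_update_swap Suc_diff_le intro!: topple_topI)
  qed (use top in \<open>auto simp: wf_config_def map_update intro!: topple_topI\<close>)
next
  case (bot j cb ct)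
  show ?case
  proof (cases v)
    case (Inr b)
    then show ?thesis
      using bot by (cases "b = j")
        (auto simp: wf_config_def list_update_swap Suc_diff_le Suc_diff_Suc intro!: topple_botI)
  qed (use bot in \<open>auto simp: wf_config_def map_update intro!: topple_botI\<close>)
qed

lemma topples_add_grain:
  "(topple m n)\<^sup>*\<^sup>* c d \<Longrightarrow> wf_config m n c \<Longrightarrow> is_vertex m n v \<Longrightarrow>
   (topple m n)\<^sup>*\<^sup>* (add_grain v c) (add_grain v d)"
proof (induction rule: rtranclp_induct)
  case (step y z)
  then show ?case
    using wf_config_topples topple_add_grain by (metis rtranclp.rtrancl_into_rtrancl)
qed simp

lemma topples_fold_add_grain:
  "(topple m n)\<^sup>*\<^sup>* c d \<Longrightarrow> wf_config m n c \<Longrightarrow> \<forall>v\<in>set vs. is_vertex m n v \<Longrightarrow>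
   (topple m n)\<^sup>*\<^sup>* (fold add_grain vs c) (fold add_grain vs d)"
  by (induction vs arbitrary: c d) (auto simp: topples_add_grain wf_config_add_grain)

lemma topple_top_top_join:
  assumes "i < m" "i' < m" "i \<noteq> i'" "n \<le> ct ! i" "n \<le> ct ! i'"
  shows "\<exists>e. topple m n (ct[i := ct ! i - n], map Suc cb) e \<and>
    topple m n (ct[i' := ct ! i' - n], map Suc cb) e"
proof -
  let ?e = "(ct[i := ct ! i - n, i' := ct ! i' - n], map Suc (map Suc cb))"
  have "topple m n (ct[i := ct ! i - n], map Suc cb) ?e"
    using assms by (intro topple_topI[where i = i']) auto
  moreover have "topple m n (ct[i' := ct ! i' - n], map Suc cb) ?e"
    using assms by (intro topple_topI[where i = i]) (auto simp: list_update_swap)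
  ultimately show ?thesis
    by blast
qed

lemma topple_bot_bot_join:
  assumes "j < n" "j' < n" "j \<noteq> j'" "m + 1 \<le> cb ! j" "m + 1 \<le> cb ! j'"
  shows "\<exists>e. topple m n (map Suc ct, cb[j := cb ! j - (m + 1)]) e \<and>
    topple m n (map Suc ct, cb[j' := cb ! j' - (m + 1)]) e"
proof -
  let ?e = "(map Suc (map Suc ct), cb[j := cb ! j - (m + 1), j' := cb ! j' - (m + 1)])"
  have "topple m n (map Suc ct, cb[j := cb ! j - (m + 1)]) ?e"
    using assms by (intro topple_botI[where j = j']) auto
  moreover have "topple m n (map Suc ct, cb[j' := cb ! j' - (m + 1)]) ?e"
    using assms by (intro topple_botI[where j = j]) (auto simp: list_update_swap)
  ultimately show ?thesis
    by blast
qed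

lemma topple_top_bot_join:
  assumes "wf_config m n (ct, cb)" "i < m" "n \<le> ct ! i" "j < n" "m + 1 \<le> cb ! j"
  shows "\<exists>e. topple m n (ct[i := ct ! i - n], map Suc cb) e \<and>
    topple m n (map Suc ct, cb[j := cb ! j - (m + 1)]) e"
proof -
  let ?e = "(map Suc (ct[i := ct ! i - n]), (map Suc cb)[j := Suc (cb ! j) - (m + 1)])"
  have "topple m n (ct[i := ct ! i - n], map Suc cb) ?e"
    using assms by (intro topple_botI) (auto simp: wf_config_def Suc_diff_le Suc_diff_Suc)
  moreover have "topple m n (map Suc ct, cb[j := cb ! j - (m + 1)]) ?e"
    using assms by (intro topple_topI) (auto simp: wf_config_def map_update Suc_diff_le Suc_diff_Suc)
  ultimately show ?thesis
    by blast
qed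

lemma topple_diamond:
  assumes "topple m n c d1" "topple m n c d2" "wf_config m n c"
  shows "d1 = d2 \<or> (\<exists>e. topple m n d1 e \<and> topple m n d2 e)"
  using assms
proof (induction rule: topple.induct)
  case (top i ct cb)
  note hyps = top.hyps and wf = top.prems(2)
  from top.prems(1) show ?case
  proof cases
    case (top i')
    then show ?thesis
      using hyps topple_top_top_join[of i m i' n ct cb] by (cases "i = i'") auto
  next
    case (bot j)
    then show ?thesis
      using hyps wf topple_top_bot_join by blast
  qed
next
  case (bot j cb ct)
  note hyps = bot.hyps and wf = bot.prems(2)
  from bot.prems(1) show ?case
  proof cases
    case (bot j')
    then show ?thesis
      using hyps topple_bot_bot_join[of j n j' m cb ct] by (cases "j = j'") auto
  next
    case (top i)
    then show ?thesis
      using hyps wf topple_top_bot_join by blast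
  qed
qed

text \<open>Toppling is only locally confluent on well-formed configurations, so confluence is
  derived for the restriction of \<open>topple\<close> to them.\<close>

lemma topples_confluent:
  assumes "wf_config m n c" "(topple m n)\<^sup>*\<^sup>* c d1" "(topple m n)\<^sup>*\<^sup>* c d2"
  shows "\<exists>e. (topple m n)\<^sup>*\<^sup>* d1 e \<and> (topple m n)\<^sup>*\<^sup>* d2 e"
proof -
  let ?r = "\<lambda>c d. wf_config m n c \<and> topple m n c d"
  have "strong_confluentp ?r"
  proof
    fix x y z assume "?r x y" "?r x z"
    then have wf: "wf_config m n y" "wf_config m n z"
      using wf_config_topple by blast+
    from \<open>?r x y\<close> \<open>?r x z\<close> have "y = z \<or> (\<exists>e. topple m n y e \<and> topple m n z e)"
      using topple_diamond by blast
    then show "\<exists>u. ?r\<^sup>*\<^sup>* y u \<and> ?r\<^sup>=\<^sup>= z u"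
    proof
      assume "\<exists>e. topple m n y e \<and> topple m n z e"
      then show ?thesis
        using wf by blast
    qed blast
  qed
  then have confl: "confluentp ?r"
    by (rule strong_confluentp_imp_confluentp)
  have restrict: "?r\<^sup>*\<^sup>* x y" if "(topple m n)\<^sup>*\<^sup>* x y" "wf_config m n x" for x y
    using that by (induction rule: rtranclp_induct)
      (auto intro: rtranclp.rtrancl_into_rtrancl wf_config_topples)
  have "?r\<^sup>*\<^sup>* \<le> (topple m n)\<^sup>*\<^sup>*"
    by (rule rtranclp_mono) auto
  then show ?thesis
    using confluentpD[OF confl restrict[OF assms(2,1)] restrict[OF assms(3,1)]] by blast
qed

lemma stabilisation_unique:
  assumes "wf_config m n c" "stabilises m n c d1" "stabilises m n c d2"
  shows "d1 = d2"
proof -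
  obtain e where "(topple m n)\<^sup>*\<^sup>* d1 e" "(topple m n)\<^sup>*\<^sup>* d2 e"
    using topples_confluent assms unfolding stabilises_def by blast
  moreover have "stable m n d1" "stable m n d2"
    using assms(2,3) unfolding stabilises_def by auto
  ultimately show ?thesis
    using stable_topples_eq by blast
qed

definition grains :: "config \<Rightarrow> nat" where
  "grains c = sum_list (fst c) + sum_list (snd c)"

text \<open>A bottom toppling loses a grain to the sink; a top toppling keeps the number of
  grains but moves \<open>n \<ge> 1\<close> of them to the bottom.\<close>

lemma topple_decreases:
  assumes "topple m n c d" "wf_config m n c" "1 \<le> n"
  shows "(d, c) \<in> measures [grains, \<lambda>c. sum_list (fst c)]"
  using assms
proof (induction rule: topple.induct)
  case (top i ct cb)
  then have "i < length ct" "length cb = n"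
    by (auto simp: wf_config_def)
  then show ?case
    using top elem_le_sum_list[of i ct] by (simp add: grains_def sum_list_update sum_list_Suc)
next
  case (bot j cb ct)
  then have "j < length cb" "length ct = m"
    by (auto simp: wf_config_def)
  then show ?case
    using bot elem_le_sum_list[of j cb] by (simp add: grains_def sum_list_update sum_list_Suc)
qed

lemma unstable_topple:
  assumes "wf_config m n c" "\<not> stable m n c"
  obtains d where "topple m n c d"
proof -
  obtain ct cb where c: "c = (ct, cb)"
    by (cases c)
  from assms have "(\<exists>i<m. n \<le> ct ! i) \<or> (\<exists>j<n. m + 1 \<le> cb ! j)"
    unfolding stable_def c by auto
  then show ?thesis
  proof
    assume "\<exists>i<m. n \<le> ct ! i"
    then show ?thesis
      using that topple.top unfolding c by blast
  next
    assume "\<exists>j<n. m + 1 \<le> cb ! j"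
    then show ?thesis
      using that topple.bot unfolding c by blast
  qed
qed

lemma stabilisation_exists:
  assumes "wf_config m n c" "1 \<le> n"
  shows "\<exists>d. stabilises m n c d"
  using assms(1)
proof (induction c rule: wf_induct[OF wf_measures[of "[grains, \<lambda>c. sum_list (fst c)]"]])
  case (1 c)
  show ?case
  proof (cases "stable m n c")
    case False
    then obtain d where d: "topple m n c d"
      using unstable_topple 1 by blast
    have "wf_config m n d"
      using d 1(2) by (rule wf_config_topple)
    moreover have "(d, c) \<in> measures [grains, \<lambda>c. sum_list (fst c)]"
      using d 1(2) assms(2) by (rule topple_decreases)
    ultimately obtain e where "stabilises m n d e"
      using 1(1) by blast
    then show ?thesis
      using d unfolding stabilises_def by (meson converse_rtranclp_into_rtranclp)
  qed (unfold stabilises_def, blast)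
qed

lemma chain_steps_fold_add_grain:
  assumes "stable m n x" "\<forall>v\<in>set vs. is_vertex m n v" "stabilises m n (fold add_grain vs x) y"
    "1 \<le> n"
  shows "(chain_step m n)\<^sup>*\<^sup>* x y"
  using assms
proof (induction vs arbitrary: x)
  case Nil
  then have "y = x"
    using stable_topples_eq by (simp add: stabilises_def)
  then show ?case
    by simp
next
  case (Cons v vs)
  have wf: "wf_config m n (add_grain v x)"
    using Cons.prems(1) stable_imp_wf_config wf_config_add_grain by blast
  obtain x' where x': "stabilises m n (add_grain v x) x'"
    using stabilisation_exists[OF wf Cons.prems(4)] by blast
  then have step: "chain_step m n x x'"
    using Cons.prems unfolding chain_step_iff by auto
  have "stable m n x'"
    using x' by (simp add: stabilises_def)
  then obtain y' where y': "stabilises m n (fold add_grain vs x') y'"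
    using stabilisation_exists[OF wf_config_fold_add_grain Cons.prems(4)] stable_imp_wf_config
    by blast
  have "(topple m n)\<^sup>*\<^sup>* (fold add_grain vs (add_grain v x)) (fold add_grain vs x')"
    using topples_fold_add_grain x' wf Cons.prems(2) by (simp add: stabilises_def)
  then have "stabilises m n (fold add_grain vs (add_grain v x)) y'"
    using y' unfolding stabilises_def by (meson rtranclp_trans)
  then have "y' = y"
    using stabilisation_unique[OF wf_config_fold_add_grain[OF wf]] Cons.prems(3) by simp
  then have "(chain_step m n)\<^sup>*\<^sup>* x' y"
    using Cons.IH[OF \<open>stable m n x'\<close> _ _ Cons.prems(4)] y' Cons.prems(2) by simp
  then show ?case
    using step by (meson converse_rtranclp_into_rtranclp)
qed

section \<open>Recurrence and forbidden subconfigurations\<close>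

definition max_stable :: "nat \<Rightarrow> nat \<Rightarrow> config" where
  "max_stable m n = (replicate m (n - 1), replicate n m)"

lemma stable_max_stable: "1 \<le> n \<Longrightarrow> stable m n (max_stable m n)"
  by (auto simp: stable_def wf_config_def max_stable_def)

lemma sum_list_le_length_mult: "\<forall>x\<in>set xs. x \<le> B \<Longrightarrow> sum_list xs \<le> length xs * B"
  by (induction xs) auto

lemma stable_entries_le:
  assumes "stable m n d"
  shows "\<forall>x\<in>set (fst d). x \<le> n - 1" "\<forall>x\<in>set (snd d). x \<le> m"
proof -
  have "x < n" if "x \<in> set (fst d)" for x
    using that assms by (auto simp: stable_def wf_config_def in_set_conv_nth)
  then show "\<forall>x\<in>set (fst d). x \<le> n - 1"
    by fastforce
  have "x < m + 1" if "x \<in> set (snd d)" for x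
    using that assms by (auto simp: stable_def wf_config_def in_set_conv_nth)
  then show "\<forall>x\<in>set (snd d). x \<le> m"
    by fastforce
qed

lemma grains_le_if_stable:
  assumes "stable m n d"
  shows "grains d \<le> m * (n - 1) + n * m"
proof -
  have len: "length (fst d) = m" "length (snd d) = n"
    using assms by (auto simp: stable_def wf_config_def)
  have "sum_list (fst d) \<le> m * (n - 1)" "sum_list (snd d) \<le> n * m"
    using sum_list_le_length_mult[OF stable_entries_le(1)[OF assms]]
      sum_list_le_length_mult[OF stable_entries_le(2)[OF assms]] len by simp_all
  then show ?thesis
    by (simp add: grains_def)
qed

lemma grains_add_grain:
  "wf_config m n d \<Longrightarrow> is_vertex m n v \<Longrightarrow> grains (add_grain v d) = Suc (grains d)"
  by (cases v) (auto simp: grains_def wf_config_def sum_list_update)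

lemma stable_below_max_stable:
  assumes "stable m n d" "d \<noteq> max_stable m n"
  shows "(\<exists>i<m. fst d ! i < n - 1) \<or> (\<exists>j<n. snd d ! j < m)"
proof (rule ccontr)
  assume none: "\<not> ?thesis"
  have len: "length (fst d) = m" "length (snd d) = n"
    using assms(1) by (auto simp: stable_def wf_config_def)
  have "fst d ! i = n - 1" if "i < m" for i
  proof -
    have "\<not> fst d ! i < n - 1" "fst d ! i \<le> n - 1"
      using that none stable_entries_le(1)[OF assms(1)] len by (auto simp: nth_mem)
    then show ?thesis
      by linarith
  qed
  moreover have "snd d ! j = m" if "j < n" for j
  proof -
    have "\<not> snd d ! j < m" "snd d ! j \<le> m"
      using that none stable_entries_le(2)[OF assms(1)] len by (auto simp: nth_mem)
    then show ?thesis
      by linarith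
  qed
  ultimately have "fst d = replicate m (n - 1)" "snd d = replicate n m"
    using len by (auto intro!: nth_equalityI)
  then show False
    using assms(2) by (simp add: max_stable_def prod_eq_iff)
qed

lemma stable_add_grain_below_max:
  assumes "stable m n d" "d \<noteq> max_stable m n"
  obtains v where "is_vertex m n v" "stable m n (add_grain v d)"
proof -
  have len: "length (fst d) = m" "length (snd d) = n"
    using assms(1) by (auto simp: stable_def wf_config_def)
  from stable_below_max_stable[OF assms] show ?thesis
  proof
    assume "\<exists>i<m. fst d ! i < n - 1"
    then obtain i where "i < m" "fst d ! i < n - 1"
      by blast
    then show ?thesis
      using that[of "Inl i"] assms(1) len by (auto simp: stable_def wf_config_def nth_list_update)
  next
    assume "\<exists>j<n. snd d ! j < m"
    then obtain j where "j < n" "snd d ! j < m"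
      by blast
    then show ?thesis
      using that[of "Inr j"] assms(1) len by (auto simp: stable_def wf_config_def nth_list_update)
  qed
qed

lemma chain_step_add_grain:
  "stable m n d \<Longrightarrow> is_vertex m n v \<Longrightarrow> stable m n (add_grain v d) \<Longrightarrow>
   chain_step m n d (add_grain v d)"
  unfolding chain_step_iff stabilises_def by blast

lemma reaches_max_stable:
  assumes "stable m n d"
  shows "(chain_step m n)\<^sup>*\<^sup>* d (max_stable m n)"
  using assms
proof (induction "m * (n - 1) + n * m - grains d" arbitrary: d rule: less_induct)
  case less
  show ?case
  proof (cases "d = max_stable m n")
    case False
    obtain v where v: "is_vertex m n v" "stable m n (add_grain v d)"
      using stable_add_grain_below_max[OF less.prems False] by blast
    have "grains (add_grain v d) = Suc (grains d)"
      using grains_add_grain[OF stable_imp_wf_config[OF less.prems] v(1)] .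
    then have "m * (n - 1) + n * m - grains (add_grain v d) < m * (n - 1) + n * m - grains d"
      using grains_le_if_stable[OF v(2)] by linarith
    then have "(chain_step m n)\<^sup>*\<^sup>* (add_grain v d) (max_stable m n)"
      using less.hyps v(2) by blast
    then show ?thesis
      using chain_step_add_grain[OF less.prems v] by (meson converse_rtranclp_into_rtranclp)
  qed simp
qed

lemma stable_chain_steps: "(chain_step m n)\<^sup>*\<^sup>* c d \<Longrightarrow> stable m n c \<Longrightarrow> stable m n d"
  by (induction rule: rtranclp_induct) (auto simp: chain_step_iff stabilises_def)

lemma det_recurrent_iff_reachable:
  "det_recurrent m n c \<longleftrightarrow> stable m n c \<and> (chain_step m n)\<^sup>*\<^sup>* (max_stable m n) c"
proof
  assume "det_recurrent m n c"
  then show "stable m n c \<and> (chain_step m n)\<^sup>*\<^sup>* (max_stable m n) c"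
    using reaches_max_stable unfolding det_recurrent_def by blast
next
  assume c: "stable m n c \<and> (chain_step m n)\<^sup>*\<^sup>* (max_stable m n) c"
  have "(chain_step m n)\<^sup>*\<^sup>* d c" if "(chain_step m n)\<^sup>*\<^sup>* c d" for d
    using reaches_max_stable[OF stable_chain_steps[OF that]] c by (meson rtranclp_trans)
  then show "det_recurrent m n c"
    unfolding det_recurrent_def using c by blast
qed

definition no_forbidden_subconfig :: "nat \<Rightarrow> nat \<Rightarrow> config \<Rightarrow> bool" where
  "no_forbidden_subconfig m n c \<longleftrightarrow> (\<forall>I J. I \<subseteq> {..<m} \<longrightarrow> J \<subseteq> {..<n} \<longrightarrow> I \<noteq> {} \<or> J \<noteq> {} \<longrightarrow>
      (\<exists>i\<in>I. card J \<le> fst c ! i) \<or> (\<exists>j\<in>J. card I \<le> snd c ! j))"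

lemma no_forbidden_subconfigD:
  "no_forbidden_subconfig m n c \<Longrightarrow> I \<subseteq> {..<m} \<Longrightarrow> J \<subseteq> {..<n} \<Longrightarrow> I \<noteq> {} \<or> J \<noteq> {} \<Longrightarrow>
   (\<exists>i\<in>I. card J \<le> fst c ! i) \<or> (\<exists>j\<in>J. card I \<le> snd c ! j)"
  unfolding no_forbidden_subconfig_def by blast

lemma no_forbidden_subconfig_mono:
  assumes "no_forbidden_subconfig m n c"
    "\<forall>i<m. fst c ! i \<le> fst c' ! i" "\<forall>j<n. snd c ! j \<le> snd c' ! j"
  shows "no_forbidden_subconfig m n c'"
  unfolding no_forbidden_subconfig_def
proof (intro allI impI)
  fix I J assume IJ: "I \<subseteq> {..<m}" "J \<subseteq> {..<n}" "I \<noteq> {} \<or> J \<noteq> {}"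
  then have "(\<exists>i\<in>I. card J \<le> fst c ! i) \<or> (\<exists>j\<in>J. card I \<le> snd c ! j)"
    using assms(1) no_forbidden_subconfigD by blast
  then show "(\<exists>i\<in>I. card J \<le> fst c' ! i) \<or> (\<exists>j\<in>J. card I \<le> snd c' ! j)"
  proof
    assume "\<exists>i\<in>I. card J \<le> fst c ! i"
    then obtain i where "i \<in> I" "card J \<le> fst c ! i"
      by blast
    moreover have "fst c ! i \<le> fst c' ! i"
      using assms(2) IJ(1) \<open>i \<in> I\<close> by auto
    ultimately show ?thesis
      using le_trans by blast
  next
    assume "\<exists>j\<in>J. card I \<le> snd c ! j"
    then obtain j where "j \<in> J" "card I \<le> snd c ! j"
      by blast
    moreover have "snd c ! j \<le> snd c' ! j"
      using assms(3) IJ(2) \<open>j \<in> J\<close> by auto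
    ultimately show ?thesis
      using le_trans by blast
  qed
qed

lemma no_forbidden_subconfig_add_grain:
  assumes "no_forbidden_subconfig m n c" "wf_config m n c"
  shows "no_forbidden_subconfig m n (add_grain v c)"
  using assms(1)
proof (rule no_forbidden_subconfig_mono)
  have incr: "xs ! i \<le> xs[a := Suc (xs ! a)] ! i" for xs :: "nat list" and a i
    by (cases "a = i"; cases "i < length xs") (auto simp: list_update_beyond)
  show "\<forall>i<m. fst c ! i \<le> fst (add_grain v c) ! i" "\<forall>j<n. snd c ! j \<le> snd (add_grain v c) ! j"
    by (cases v; simp add: incr)+
qed

lemma card_le_Suc_card_Diff1: "finite I \<Longrightarrow> card I \<le> Suc (card (I - {i}))"
  by (cases "i \<in> I") (auto simp: card_Diff_singleton_if)

lemma no_forbidden_subconfig_swap: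
  assumes "no_forbidden_subconfig m n (ct, cb)"
  shows "no_forbidden_subconfig n m (cb, ct)"
  unfolding no_forbidden_subconfig_def
proof (intro allI impI)
  fix J I assume JI: "J \<subseteq> {..<n}" "I \<subseteq> {..<m}" "J \<noteq> {} \<or> I \<noteq> {}"
  then have "(\<exists>i\<in>I. card J \<le> ct ! i) \<or> (\<exists>j\<in>J. card I \<le> cb ! j)"
    using no_forbidden_subconfigD[OF assms JI(2,1)] by auto
  then show "(\<exists>j\<in>J. card I \<le> fst (cb, ct) ! j) \<or> (\<exists>i\<in>I. card J \<le> snd (cb, ct) ! i)"
    by auto
qed

text \<open>After toppling the top vertex \<open>i\<close>, a candidate \<open>(I, J)\<close> is handled by applying the
  hypothesis to \<open>(I - {i}, J)\<close>. Bottom topplings reduce to this case by exchanging the roles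
  of top and bottom.\<close>

lemma no_forbidden_subconfig_top_toppled:
  assumes "no_forbidden_subconfig m n (ct, cb)"
    "\<forall>x<m. x \<noteq> i \<longrightarrow> ct ! x \<le> ct' ! x" "\<forall>y<n. cb ! y < cb' ! y"
  shows "no_forbidden_subconfig m n (ct', cb')"
  unfolding no_forbidden_subconfig_def
proof (intro allI impI)
  fix I J assume IJ: "I \<subseteq> {..<m}" "J \<subseteq> {..<n}" "I \<noteq> {} \<or> J \<noteq> {}"
  show "(\<exists>x\<in>I. card J \<le> fst (ct', cb') ! x) \<or> (\<exists>y\<in>J. card I \<le> snd (ct', cb') ! y)"
  proof (cases "I - {i} = {} \<and> J = {}")
    case True
    then have "i \<in> I" "J = {}"
      using IJ(3) by auto
    then show ?thesis
      by (intro disjI1 bexI[of _ i]) simp_all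
  next
    case False
    then have "I - {i} \<subseteq> {..<m}" "I - {i} \<noteq> {} \<or> J \<noteq> {}"
      using IJ(1) by auto
    then have "(\<exists>x\<in>I - {i}. card J \<le> ct ! x) \<or> (\<exists>y\<in>J. card (I - {i}) \<le> cb ! y)"
      using no_forbidden_subconfigD[OF assms(1) _ IJ(2)] by simp
    then show ?thesis
    proof
      assume "\<exists>x\<in>I - {i}. card J \<le> ct ! x"
      then obtain x where "x \<in> I" "x \<noteq> i" "card J \<le> ct ! x"
        by blast
      moreover have "ct ! x \<le> ct' ! x"
        using assms(2) IJ(1) \<open>x \<in> I\<close> \<open>x \<noteq> i\<close> by auto
      ultimately have "card J \<le> fst (ct', cb') ! x"
        by simp
      then show ?thesis
        using \<open>x \<in> I\<close> by blast
    next
      assume "\<exists>y\<in>J. card (I - {i}) \<le> cb ! y"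
      then obtain y where "y \<in> J" "card (I - {i}) \<le> cb ! y"
        by blast
      moreover have "cb ! y < cb' ! y"
        using assms(3) IJ(2) \<open>y \<in> J\<close> by auto
      moreover have "card I \<le> Suc (card (I - {i}))"
        using finite_subset[OF IJ(1)] by (simp add: card_le_Suc_card_Diff1)
      ultimately have "card I \<le> snd (ct', cb') ! y"
        by simp
      then show ?thesis
        using \<open>y \<in> J\<close> by blast
    qed
  qed
qed

lemma no_forbidden_subconfig_topple:
  assumes "topple m n c d" "wf_config m n c" "no_forbidden_subconfig m n c"
  shows "no_forbidden_subconfig m n d"
  using assms
proof (induction rule: topple.induct)
  case (top i ct cb)
  show ?case
  proof (rule no_forbidden_subconfig_top_toppled[OF top.prems(2), where i = i])
    show "\<forall>y<n. cb ! y < map Suc cb ! y"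
      using top.prems(1) by (simp add: wf_config_def)
  qed simp
next
  case (bot j cb ct)
  have "no_forbidden_subconfig n m (cb, ct)"
    using bot.prems(2) by (rule no_forbidden_subconfig_swap)
  then have "no_forbidden_subconfig n m (cb[j := cb ! j - (m + 1)], map Suc ct)"
  proof (rule no_forbidden_subconfig_top_toppled[where i = j])
    show "\<forall>x<m. ct ! x < map Suc ct ! x"
      using bot.prems(1) by (simp add: wf_config_def)
  qed simp
  then show ?case
    by (rule no_forbidden_subconfig_swap)
qed

lemma no_forbidden_subconfig_topples:
  "(topple m n)\<^sup>*\<^sup>* c d \<Longrightarrow> wf_config m n c \<Longrightarrow> no_forbidden_subconfig m n c \<Longrightarrow>
   no_forbidden_subconfig m n d"
proof (induction rule: rtranclp_induct)
  case (step y z)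
  have "wf_config m n y"
    using step.hyps(1) step.prems(1) by (rule wf_config_topples)
  then show ?case
    using no_forbidden_subconfig_topple[OF step.hyps(2)] step.IH step.prems by blast
qed

lemma no_forbidden_subconfig_chain_steps:
  "(chain_step m n)\<^sup>*\<^sup>* c d \<Longrightarrow> no_forbidden_subconfig m n c \<Longrightarrow> no_forbidden_subconfig m n d"
proof (induction rule: rtranclp_induct)
  case (step y z)
  then obtain v where y: "stable m n y" and yz: "stabilises m n (add_grain v y) z"
    unfolding chain_step_iff by blast
  have wf: "wf_config m n (add_grain v y)"
    using stable_imp_wf_config[OF y] by (rule wf_config_add_grain)
  have "no_forbidden_subconfig m n (add_grain v y)"
    using step.IH[OF step.prems] stable_imp_wf_config[OF y] by (rule no_forbidden_subconfig_add_grain)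
  then show ?case
    using no_forbidden_subconfig_topples[OF _ wf] yz unfolding stabilises_def by blast
qed

lemma no_forbidden_subconfig_max_stable: "no_forbidden_subconfig m n (max_stable m n)"
  unfolding no_forbidden_subconfig_def
proof (intro allI impI)
  fix I J assume IJ: "I \<subseteq> {..<m}" "J \<subseteq> {..<n}" "I \<noteq> {} \<or> J \<noteq> {}"
  show "(\<exists>i\<in>I. card J \<le> fst (max_stable m n) ! i) \<or> (\<exists>j\<in>J. card I \<le> snd (max_stable m n) ! j)"
  proof (cases "J = {}")
    case False
    then obtain j where "j \<in> J"
      by blast
    moreover have "card I \<le> m"
      using card_mono[OF _ IJ(1)] by simp
    ultimately show ?thesis
      using IJ(2) by (intro disjI2 bexI[of _ j]) (auto simp: max_stable_def)
  next
    case True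
    then obtain i where "i \<in> I"
      using IJ(3) by blast
    then show ?thesis
      using True by (intro disjI1 bexI[of _ i]) simp_all
  qed
qed

section \<open>The burning algorithm\<close>

text \<open>Dhar's burning algorithm, run on \<open>c\<close> with one extra grain on every bottom vertex (as if
  the sink had toppled): the configuration reached once exactly the vertices outside \<open>I\<close>
  and \<open>J\<close> have toppled, each once.\<close>

definition burning_config :: "nat \<Rightarrow> nat \<Rightarrow> config \<Rightarrow> nat set \<Rightarrow> nat set \<Rightarrow> config" where
  "burning_config m n c I J =
     (map (\<lambda>i. if i \<in> I then fst c ! i + (n - card J) else fst c ! i - card J) [0..<m],
      map (\<lambda>j. if j \<in> J then snd c ! j + 1 + (m - card I) else snd c ! j - card I) [0..<n])"

lemma burning_config_empty: "wf_config m n c \<Longrightarrow> burning_config m n c {} {} = c"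
  unfolding burning_config_def wf_config_def by (cases c) (auto intro!: nth_equalityI)

lemma burning_config_full:
  "wf_config m n c \<Longrightarrow> burning_config m n c {..<m} {..<n} = (fst c, map Suc (snd c))"
  unfolding burning_config_def wf_config_def by (auto intro!: nth_equalityI)

lemma topple_burning_config_top:
  assumes "I \<subseteq> {..<m}" "J \<subseteq> {..<n}" "i \<in> I" "card J \<le> fst c ! i"
    "\<forall>j<n. j \<notin> J \<longrightarrow> card I \<le> snd c ! j"
  shows "topple m n (burning_config m n c I J) (burning_config m n c (I - {i}) J)"
proof -
  have card: "card I \<le> m" "card J \<le> n" "card (I - {i}) = card I - 1" "1 \<le> card I"
    using card_mono[OF _ assms(1)] card_mono[OF _ assms(2)] assms(3) finite_subset[OF assms(1)]
    by (auto simp: Suc_le_eq card_gt_0_iff)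
  have "i < m"
    using assms(1,3) by auto
  then show ?thesis
    unfolding burning_config_def
    by (rule topple_topI) (use assms card in \<open>auto intro!: prod_eqI nth_equalityI simp: nth_list_update\<close>)
qed

lemma topple_burning_config_bot:
  assumes "I \<subseteq> {..<m}" "J \<subseteq> {..<n}" "j \<in> J" "card I \<le> snd c ! j"
    "\<forall>i<m. i \<notin> I \<longrightarrow> card J \<le> fst c ! i"
  shows "topple m n (burning_config m n c I J) (burning_config m n c I (J - {j}))"
proof -
  have card: "card I \<le> m" "card J \<le> n" "card (J - {j}) = card J - 1" "1 \<le> card J"
    using card_mono[OF _ assms(1)] card_mono[OF _ assms(2)] assms(3) finite_subset[OF assms(2)]
    by (auto simp: Suc_le_eq card_gt_0_iff)
  have "j < n"
    using assms(2,3) by auto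
  then show ?thesis
    unfolding burning_config_def
    by (rule topple_botI) (use assms card in \<open>auto intro!: prod_eqI nth_equalityI simp: nth_list_update\<close>)
qed

lemma burning_step:
  assumes "no_forbidden_subconfig m n c" "I \<subseteq> {..<m}" "J \<subseteq> {..<n}" "I \<noteq> {} \<or> J \<noteq> {}"
    "\<forall>i<m. i \<notin> I \<longrightarrow> card J \<le> fst c ! i" "\<forall>j<n. j \<notin> J \<longrightarrow> card I \<le> snd c ! j"
  obtains I' J' where "card I' + card J' < card I + card J" "I' \<subseteq> {..<m}" "J' \<subseteq> {..<n}"
    "\<forall>i<m. i \<notin> I' \<longrightarrow> card J' \<le> fst c ! i" "\<forall>j<n. j \<notin> J' \<longrightarrow> card I' \<le> snd c ! j"
    "topple m n (burning_config m n c I J) (burning_config m n c I' J')"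
proof -
  from no_forbidden_subconfigD[OF assms(1-4)] show ?thesis
  proof
    assume "\<exists>i\<in>I. card J \<le> fst c ! i"
    then obtain i where i: "i \<in> I" "card J \<le> fst c ! i"
      by blast
    show ?thesis
    proof (rule that[of "I - {i}" J])
      show "card (I - {i}) + card J < card I + card J"
        using card_Diff1_less[OF finite_subset[OF assms(2)] i(1)] by simp
      show "\<forall>j<n. j \<notin> J \<longrightarrow> card (I - {i}) \<le> snd c ! j"
        using assms(6) card_Diff1_le[of I i] by (auto intro: le_trans)
      show "topple m n (burning_config m n c I J) (burning_config m n c (I - {i}) J)"
        using assms(2,3) i assms(6) by (rule topple_burning_config_top)
    qed (use assms(2,3,5) i in auto)
  next
    assume "\<exists>j\<in>J. card I \<le> snd c ! j"
    then obtain j where j: "j \<in> J" "card I \<le> snd c ! j"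
      by blast
    show ?thesis
    proof (rule that[of I "J - {j}"])
      show "card I + card (J - {j}) < card I + card J"
        using card_Diff1_less[OF finite_subset[OF assms(3)] j(1)] by simp
      show "\<forall>i<m. i \<notin> I \<longrightarrow> card (J - {j}) \<le> fst c ! i"
        using assms(5) card_Diff1_le[of J j] by (auto intro: le_trans)
      show "topple m n (burning_config m n c I J) (burning_config m n c I (J - {j}))"
        using assms(2,3) j assms(5) by (rule topple_burning_config_bot)
    qed (use assms(2,3,6) j in auto)
  qed
qed

lemma topples_burning_config:
  assumes "no_forbidden_subconfig m n c"
  shows "I \<subseteq> {..<m} \<Longrightarrow> J \<subseteq> {..<n} \<Longrightarrow> \<forall>i<m. i \<notin> I \<longrightarrow> card J \<le> fst c ! i \<Longrightarrow>
    \<forall>j<n. j \<notin> J \<longrightarrow> card I \<le> snd c ! j \<Longrightarrow>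
    (topple m n)\<^sup>*\<^sup>* (burning_config m n c I J) (burning_config m n c {} {})"
proof (induction "card I + card J" arbitrary: I J rule: less_induct)
  case less
  show ?case
  proof (cases "I = {} \<and> J = {}")
    case False
    obtain I' J' where IJ': "card I' + card J' < card I + card J" "I' \<subseteq> {..<m}" "J' \<subseteq> {..<n}"
      "\<forall>i<m. i \<notin> I' \<longrightarrow> card J' \<le> fst c ! i" "\<forall>j<n. j \<notin> J' \<longrightarrow> card I' \<le> snd c ! j"
      "topple m n (burning_config m n c I J) (burning_config m n c I' J')"
      using burning_step[OF assms less.prems(1,2) _ less.prems(3,4)] False by blast
    have "(topple m n)\<^sup>*\<^sup>* (burning_config m n c I' J') (burning_config m n c {} {})"
      using less.hyps[OF IJ'(1-5)] .
    then show ?thesis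
      using IJ'(6) by (rule converse_rtranclp_into_rtranclp[rotated])
  qed simp
qed

lemma topples_back_after_bottom_grains:
  assumes "wf_config m n c" "no_forbidden_subconfig m n c"
  shows "(topple m n)\<^sup>*\<^sup>* (fst c, map Suc (snd c)) c"
  using topples_burning_config[OF assms(2), of "{..<m}" "{..<n}"]
  by (simp add: burning_config_empty[OF assms(1)] burning_config_full[OF assms(1)])

lemma count_list_replicate: "count_list (replicate k x) y = (if x = y then k else 0)"
  by (induction k) auto

lemma count_list_concat_replicate: "count_list (concat (replicate k xs)) y = k * count_list xs y"
  by (induction k) auto

lemma count_list_blocks:
  "inj g \<Longrightarrow> count_list (concat (map (\<lambda>k. replicate (f k) (g k)) [0..<K])) (g x) = (if x < K then f x else 0)"
  by (induction K) (auto simp: count_list_replicate inj_eq)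

lemma count_list_map_upt:
  "inj g \<Longrightarrow> count_list (map g [0..<K]) (g x) = (if x < K then 1 else 0)"
  by (induction K) (auto simp: inj_eq)

lemma fold_add_grain_eq:
  "wf_config m n c \<Longrightarrow> \<forall>v\<in>set vs. is_vertex m n v \<Longrightarrow>
   fold add_grain vs c = (map (\<lambda>i. fst c ! i + count_list vs (Inl i)) [0..<m],
                          map (\<lambda>j. snd c ! j + count_list vs (Inr j)) [0..<n])"
proof (induction vs arbitrary: c)
  case Nil
  then show ?case
    by (cases c) (auto simp: wf_config_def intro!: nth_equalityI)
next
  case (Cons v vs)
  then have "fold add_grain (v # vs) c
      = (map (\<lambda>i. fst (add_grain v c) ! i + count_list vs (Inl i)) [0..<m],
         map (\<lambda>j. snd (add_grain v c) ! j + count_list vs (Inr j)) [0..<n])"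
    using wf_config_add_grain by simp
  also have "\<dots> = (map (\<lambda>i. fst c ! i + count_list (v # vs) (Inl i)) [0..<m],
                    map (\<lambda>j. snd c ! j + count_list (v # vs) (Inr j)) [0..<n])"
    using Cons.prems by (cases v) (auto simp: wf_config_def nth_list_update)
  finally show ?case .
qed

definition returns_to :: "nat \<Rightarrow> nat \<Rightarrow> config \<Rightarrow> (nat + nat) list \<Rightarrow> bool" where
  "returns_to m n c vs \<longleftrightarrow> (\<forall>v\<in>set vs. is_vertex m n v) \<and> (topple m n)\<^sup>*\<^sup>* (fold add_grain vs c) c"

lemma returns_to_append:
  assumes "wf_config m n c" "returns_to m n c vs" "returns_to m n c ws"
  shows "returns_to m n c (vs @ ws)"
proof -
  have "(topple m n)\<^sup>*\<^sup>* (fold add_grain ws (fold add_grain vs c)) (fold add_grain ws c)"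
    using topples_fold_add_grain[OF _ wf_config_fold_add_grain[OF assms(1)]] assms(2,3)
    unfolding returns_to_def by blast
  then have "(topple m n)\<^sup>*\<^sup>* (fold add_grain ws (fold add_grain vs c)) c"
    using assms(3) unfolding returns_to_def by (meson rtranclp_trans)
  then show ?thesis
    using assms(2,3) unfolding returns_to_def by auto
qed

lemma returns_to_concat:
  "wf_config m n c \<Longrightarrow> \<forall>xs\<in>set xss. returns_to m n c xs \<Longrightarrow> returns_to m n c (concat xss)"
  by (induction xss) (auto simp: returns_to_append, simp add: returns_to_def)

lemma returns_to_bottom_row:
  assumes "wf_config m n c" "no_forbidden_subconfig m n c"
  shows "returns_to m n c (map Inr [0..<n])"
proof -
  have "fold add_grain (map Inr [0..<n]) c = (fst c, map Suc (snd c))"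
    using assms(1) by (subst fold_add_grain_eq)
      (auto simp: wf_config_def count_list_map_upt count_list_0_iff intro!: nth_equalityI)
  then show ?thesis
    unfolding returns_to_def using topples_back_after_bottom_grains[OF assms] by auto
qed

lemma returns_to_top_column:
  assumes "wf_config m n c" "no_forbidden_subconfig m n c" "i < m"
  shows "returns_to m n c (replicate n (Inl i))"
proof -
  have "fold add_grain (replicate n (Inl i)) c = ((fst c)[i := fst c ! i + n], snd c)"
    using assms(1,3) by (subst fold_add_grain_eq)
      (auto simp: wf_config_def count_list_replicate nth_list_update intro!: nth_equalityI)
  moreover have "topple m n ((fst c)[i := fst c ! i + n], snd c) (fst c, map Suc (snd c))"
    using assms(1,3) by (intro topple_topI) (auto simp: wf_config_def)
  ultimately show ?thesis
    unfolding returns_to_def using topples_back_after_bottom_grains[OF assms(1,2)] assms(3)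
    by (auto intro: converse_rtranclp_into_rtranclp)
qed

text \<open>Adding \<open>1 + c\<^sub>i\<close> grains to each top and \<open>c\<^sub>j\<close> grains to each bottom vertex of the
  maximal configuration gives the same as adding \<open>n\<close> grains to each top and \<open>m\<close> to each
  bottom vertex of \<open>c\<close>, and that configuration topples back to \<open>c\<close>.\<close>

lemma reachable_from_max_stable:
  assumes "1 \<le> n" "stable m n c" "no_forbidden_subconfig m n c"
  shows "(chain_step m n)\<^sup>*\<^sup>* (max_stable m n) c"
proof -
  have wf: "wf_config m n c"
    using assms(2) by (rule stable_imp_wf_config)
  define V where "V = concat (map (\<lambda>i. replicate n (Inl i)) [0..<m])
    @ concat (replicate m (map Inr [0..<n]))"
  define W where "W = concat (map (\<lambda>i. replicate (Suc (fst c ! i)) (Inl i)) [0..<m])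
    @ concat (map (\<lambda>j. replicate (snd c ! j) (Inr j)) [0..<n])"
  have V: "returns_to m n c V"
    unfolding V_def using returns_to_top_column returns_to_bottom_row wf assms(3)
    by (intro returns_to_append returns_to_concat) auto
  have W: "\<forall>v\<in>set W. is_vertex m n v"
    unfolding W_def by auto
  have count_top: "count_list V (Inl i) = n" "count_list W (Inl i) = Suc (fst c ! i)" if "i < m" for i
    using that count_list_blocks[of Inl "\<lambda>_. n" m i] count_list_blocks[of Inl "\<lambda>i. Suc (fst c ! i)" m i]
    by (simp_all add: V_def W_def image_iff del: replicate_Suc)
  have count_bot: "count_list V (Inr j) = m" "count_list W (Inr j) = snd c ! j" if "j < n" for j
    using that count_list_map_upt[of Inr n j] count_list_blocks[of Inr "\<lambda>j. snd c ! j" n j]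
    by (auto simp: V_def W_def count_list_concat_replicate image_iff)
  have "fold add_grain W (max_stable m n) = fold add_grain V c"
    using wf stable_imp_wf_config[OF stable_max_stable[OF assms(1), of m]] V W assms(1)
    by (simp add: fold_add_grain_eq returns_to_def map_eq_conv count_top count_bot max_stable_def)
  then have "stabilises m n (fold add_grain W (max_stable m n)) c"
    using V assms(2) unfolding returns_to_def stabilises_def by simp
  then show ?thesis
    using chain_steps_fold_add_grain[OF stable_max_stable[OF assms(1)] W _ assms(1)] by blast
qed

theorem det_recurrent_iff_no_forbidden_subconfig:
  assumes "1 \<le> n"
  shows "det_recurrent m n c \<longleftrightarrow> stable m n c \<and> no_forbidden_subconfig m n c"
  using det_recurrent_iff_reachable no_forbidden_subconfig_chain_steps
    no_forbidden_subconfig_max_stable reachable_from_max_stable[OF assms] by blast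

section \<open>Sorted configurations and Motzkin paths\<close>

lemma sorted_nth_card_le_nth_Max:
  assumes "sorted xs" "finite I" "I \<noteq> {}" "I \<subseteq> {..<length xs}"
  shows "xs ! (card I - 1) \<le> xs ! Max I"
proof -
  have "card I - 1 \<le> Max I"
    using card_le_Suc_Max[OF assms(2)] by simp
  moreover have "Max I < length xs"
    using Max_in[OF assms(2,3)] assms(4) by auto
  ultimately show ?thesis
    by (rule sorted_nth_mono[OF assms(1)])
qed

text \<open>For sorted configurations it suffices to test the initial segments
  \<open>I = {..<a}\<close> and \<open>J = {..<b}\<close>.\<close>

definition no_forbidden_segments :: "nat \<Rightarrow> nat \<Rightarrow> config \<Rightarrow> bool" where
  "no_forbidden_segments m n c \<longleftrightarrow> (\<forall>a b. 0 < a \<longrightarrow> a \<le> m \<longrightarrow> 0 < b \<longrightarrow> b \<le> n \<longrightarrow>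
     b \<le> fst c ! (a - 1) \<or> a \<le> snd c ! (b - 1))"

lemma no_forbidden_segmentsD:
  "no_forbidden_segments m n c \<Longrightarrow> 0 < a \<Longrightarrow> a \<le> m \<Longrightarrow> 0 < b \<Longrightarrow> b \<le> n \<Longrightarrow>
   b \<le> fst c ! (a - 1) \<or> a \<le> snd c ! (b - 1)"
  unfolding no_forbidden_segments_def by blast

lemma no_forbidden_subconfig_imp_segments:
  assumes "wf_config m n c" "sorted_config c" "no_forbidden_subconfig m n c"
  shows "no_forbidden_segments m n c"
  unfolding no_forbidden_segments_def
proof (intro allI impI)
  fix a b assume ab: "0 < a" "a \<le> m" "0 < b" "b \<le> n"
  have len: "length (fst c) = m" "length (snd c) = n" and sorted: "sorted (fst c)" "sorted (snd c)"
    using assms(1,2) by (auto simp: wf_config_def sorted_config_def)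
  have "(\<exists>i\<in>{..<a}. b \<le> fst c ! i) \<or> (\<exists>j\<in>{..<b}. a \<le> snd c ! j)"
    using no_forbidden_subconfigD[OF assms(3), of "{..<a}" "{..<b}"] ab by auto
  moreover have "fst c ! i \<le> fst c ! (a - 1)" if "i < a" for i
    using that ab len sorted by (intro sorted_nth_mono) auto
  moreover have "snd c ! j \<le> snd c ! (b - 1)" if "j < b" for j
    using that ab len sorted by (intro sorted_nth_mono) auto
  ultimately show "b \<le> fst c ! (a - 1) \<or> a \<le> snd c ! (b - 1)"
    by (auto intro: le_trans)
qed

lemma no_forbidden_segments_imp_subconfig:
  assumes "wf_config m n c" "sorted_config c" "no_forbidden_segments m n c"
  shows "no_forbidden_subconfig m n c"
  unfolding no_forbidden_subconfig_def
proof (intro allI impI)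
  fix I J assume IJ: "I \<subseteq> {..<m}" "J \<subseteq> {..<n}" "I \<noteq> {} \<or> J \<noteq> {}"
  have len: "length (fst c) = m" "length (snd c) = n" and sorted: "sorted (fst c)" "sorted (snd c)"
    using assms(1,2) by (auto simp: wf_config_def sorted_config_def)
  have fin: "finite I" "finite J"
    using finite_subset IJ(1,2) by blast+
  show "(\<exists>i\<in>I. card J \<le> fst c ! i) \<or> (\<exists>j\<in>J. card I \<le> snd c ! j)"
  proof (cases "I = {} \<or> J = {}")
    case True
    then show ?thesis
      using IJ(3) by auto
  next
    case False
    have "card I \<le> m" "card J \<le> n"
      using card_mono[OF _ IJ(1)] card_mono[OF _ IJ(2)] by simp_all
    then have "card J \<le> fst c ! (card I - 1) \<or> card I \<le> snd c ! (card J - 1)"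
      using no_forbidden_segmentsD[OF assms(3)] False fin by (auto simp: card_gt_0_iff)
    moreover have "fst c ! (card I - 1) \<le> fst c ! Max I" "snd c ! (card J - 1) \<le> snd c ! Max J"
      using sorted_nth_card_le_nth_Max sorted fin False IJ(1,2) len by auto
    moreover have "Max I \<in> I" "Max J \<in> J"
      using fin False by simp_all
    ultimately show ?thesis
      by (auto intro: le_trans)
  qed
qed

lemma no_forbidden_subconfig_iff_segments:
  "wf_config m n c \<Longrightarrow> sorted_config c \<Longrightarrow>
   no_forbidden_subconfig m n c \<longleftrightarrow> no_forbidden_segments m n c"
  using no_forbidden_subconfig_imp_segments no_forbidden_segments_imp_subconfig by blast

text \<open>The Motzkin condition says that among the first \<open>k\<close> steps there are at most \<open>k\<close>
  steps \<open>E\<close> of the upper path and \<open>N\<close> of the lower one. Its failure at \<open>k\<close> exhibits the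
  forbidden segments formed by the first \<open>arrivals\<close> top and bottom vertices.\<close>

definition prefix_condition :: "nat \<Rightarrow> nat \<Rightarrow> config \<Rightarrow> bool" where
  "prefix_condition m n c \<longleftrightarrow>
     (\<forall>k \<le> m + n - 1. arrivals (fst c @ [n - 1]) k + arrivals (snd c) k \<le> k)"

locale sorted_stable_config =
  fixes m n :: nat and c :: config
  assumes n_pos: "1 \<le> n" and stable: "stable m n c" and sorted: "sorted_config c"
begin

abbreviation top_stack :: "nat list" where
  "top_stack \<equiv> fst c @ [n - 1]"

lemma length_config: "length (fst c) = m" "length (snd c) = n"
  using stable by (auto simp: stable_def wf_config_def)

lemma sorted_top_stack: "sorted top_stack"
proof -
  have "x \<le> n - 1" if "x \<in> set (fst c)" for x
    using that stable by (auto simp: stable_def wf_config_def in_set_conv_nth)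
  then show ?thesis
    using sorted by (auto simp: sorted_config_def sorted_append)
qed

lemma sorted_bottom: "sorted (snd c)"
  using sorted by (simp add: sorted_config_def)

lemma top_stack_nth: "x < m \<Longrightarrow> top_stack ! x = fst c ! x"
  using length_config by (simp add: nth_append)

lemma prefix_condition_imp_segments:
  assumes "prefix_condition m n c"
  shows "no_forbidden_segments m n c"
  unfolding no_forbidden_segments_def
proof (intro allI impI, rule ccontr)
  fix a b assume ab: "0 < a" "a \<le> m" "0 < b" "b \<le> n"
    and "\<not> (b \<le> fst c ! (a - 1) \<or> a \<le> snd c ! (b - 1))"
  then have "a - 1 + (fst c @ [n - 1]) ! (a - 1) < a + b - 1" "b - 1 + snd c ! (b - 1) < a + b - 1"
    using top_stack_nth[of "a - 1"] by auto
  then have "a \<le> arrivals (fst c @ [n - 1]) (a + b - 1)" "b \<le> arrivals (snd c) (a + b - 1)"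
    using le_arrivals sorted_top_stack sorted_bottom ab length_config by auto
  then show False
    using assms[unfolded prefix_condition_def, rule_format, of "a + b - 1"] ab by linarith
qed

lemma segments_imp_prefix_condition:
  assumes "no_forbidden_segments m n c"
  shows "prefix_condition m n c"
  unfolding prefix_condition_def
proof (intro allI impI, rule ccontr)
  let ?T = "fst c @ [n - 1]" and ?B = "snd c"
  fix k assume k: "k \<le> m + n - 1" and "\<not> arrivals ?T k + arrivals ?B k \<le> k"
  define p q where "p = arrivals ?T k" and "q = arrivals ?B k"
  have pq: "k < p + q" "p \<le> m + 1" "q \<le> n"
    using \<open>\<not> _ \<le> k\<close> arrivals_le_length[of ?T k] arrivals_le_length[of ?B k] length_config
    unfolding p_def q_def by auto
  have p_last: "p - 1 + ?T ! (p - 1) < k" if "0 < p"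
    using arrivals_last[OF sorted_top_stack] that unfolding p_def by blast
  have q_last: "q - 1 + ?B ! (q - 1) < k" if "0 < q"
    using arrivals_last[OF sorted_bottom] that unfolding q_def by blast
  have "0 < q"
  proof (rule ccontr)
    assume "\<not> 0 < q"
    then have "0 < p" "k < p"
      using pq(1) by auto
    then show False
      using p_last by linarith
  qed
  have "0 < p"
  proof (rule ccontr)
    assume "\<not> 0 < p"
    then have "k < q"
      using pq(1) by auto
    then show False
      using q_last[OF \<open>0 < q\<close>] by linarith
  qed
  moreover have "p \<le> m"
    using p_last[OF \<open>0 < p\<close>] pq(2) k length_config by (cases "p = m + 1") (auto simp: nth_append)
  ultimately have "fst c ! (p - 1) < q" "snd c ! (q - 1) < p"
    using p_last q_last[OF \<open>0 < q\<close>] pq(1) top_stack_nth[of "p - 1"] by auto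
  moreover have "q \<le> fst c ! (p - 1) \<or> p \<le> snd c ! (q - 1)"
    using no_forbidden_segmentsD[OF assms] \<open>0 < p\<close> \<open>0 < q\<close> \<open>p \<le> m\<close> pq(3) by blast
  ultimately show False
    by linarith
qed

end

lemma count_UHE_map_xi_step_zip:
  "length xs = length ys \<Longrightarrow>
   length (filter (\<lambda>s. s = U \<or> s = HE) (map xi_step (zip xs ys))) = count_list ys E"
proof (induction xs ys rule: list_induct2)
  case (Cons x xs y ys)
  then show ?case by (cases x; cases y) auto
qed simp

lemma butlast_zip: "length xs = length ys \<Longrightarrow> butlast (zip xs ys) = zip (butlast xs) (butlast ys)"
  by (induction xs ys rule: list_induct2) auto

text \<open>The last hypothesis makes \<open>\<Phi> c\<close> a pair of paths ending at \<open>(m + 1, n)\<close>; it holds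
  for recurrent configurations (lemma \<open>sorted_recurrent_imp_path_config\<close>).\<close>

locale path_config = sorted_stable_config +
  assumes last_bottom: "last (snd c) = m"
begin

abbreviation upper_walk :: "lstep list" where
  "upper_walk \<equiv> walk N E top_stack"

abbreviation lower_walk :: "lstep list" where
  "lower_walk \<equiv> walk E N (snd c)"

lemma bottom_ne: "snd c \<noteq> []"
  using length_config n_pos by auto

lemma length_upper_walk: "length upper_walk = m + n"
  using length_walk[OF _ sorted_top_stack] length_config n_pos by simp

lemma length_lower_walk: "length lower_walk = m + n"
  using length_walk[OF _ sorted_bottom bottom_ne] length_config last_bottom by simp

lemma alg_eq_wc_snoc_D: "alg top_stack (snd c) = wc m n c @ [D]"
proof -
  have ne: "zip upper_walk lower_walk \<noteq> []"
    using length_upper_walk length_lower_walk n_pos by (auto simp: zip_eq_Nil_iff)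
  have "last (zip upper_walk lower_walk) = (E, N)"
    using length_upper_walk length_lower_walk n_pos bottom_ne
    by (simp add: last_zip last_walk)
  then have "last (alg top_stack (snd c)) = D"
    unfolding alg_eq_map_xi_step_walks last_map[OF ne] by simp
  moreover have "alg top_stack (snd c) \<noteq> []"
    using ne unfolding alg_eq_map_xi_step_walks by simp
  then have "alg top_stack (snd c) = butlast (alg top_stack (snd c)) @ [last (alg top_stack (snd c))]"
    by simp
  ultimately show ?thesis
    unfolding wc_def fst_conv snd_conv by simp
qed

lemma wc_eq_map_xi_step: "wc m n c = map xi_step (zip (butlast upper_walk) (butlast lower_walk))"
proof -
  have "length upper_walk = length lower_walk"
    using length_upper_walk length_lower_walk by simp
  then show ?thesis
    unfolding wc_def alg_eq_map_xi_step_walks fst_conv snd_conv map_butlast[symmetric]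
    by (simp only: butlast_zip)
qed

lemma length_wc: "length (wc m n c) = m + n - 1"
  using wc_eq_map_xi_step length_upper_walk length_lower_walk by simp

lemma height_wc: "height (wc m n c) = 0"
proof -
  have "height (alg top_stack (snd c)) = -1"
    using height_map_xi_step_zip[of upper_walk lower_walk] length_upper_walk length_lower_walk
      count_walk_a[OF _ sorted_top_stack] count_walk_b[of E N "snd c"] length_config n_pos
    by (simp add: alg_eq_map_xi_step_walks)
  then show ?thesis
    using alg_eq_wc_snoc_D by simp
qed

lemma wc_eq_Xi_Phi: "wc m n c = Xi (Phi m n c)"
proof -
  have "map Suc (fst c) @ [n] = map Suc top_stack"
    using n_pos by simp
  then have "upper_path n (fst c) = N # upper_walk"
    unfolding upper_path_def using path_at_0_eq_walk[OF sorted_top_stack, of N E n] n_pos by simp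
  moreover have "lower_path m (snd c) = E # lower_walk"
    unfolding lower_path_def using path_at_0_eq_walk[OF sorted_bottom bottom_ne, of E N "m + 1"]
      last_bottom by simp
  ultimately show ?thesis
    unfolding Xi_def Phi_def wc_eq_map_xi_step by simp
qed

lemma level_eq_Area: "of_int (level m n c) = Area (wc m n c)"
proof -
  have "double_area_from 0 (alg top_stack (snd c)) = area_potential 0 top_stack (snd c)"
    using double_area_alg[OF sorted_top_stack sorted_bottom] length_upper_walk length_lower_walk
      count_walk_a[OF _ sorted_top_stack] count_walk_b[of E N "snd c"] length_config n_pos
    by simp
  also have "\<dots> = 2 * level m n c - 1"
    using length_config n_pos by (simp add: area_potential_def level_def algebra_simps of_nat_diff)
  finally have "double_area_from 0 (wc m n c) = 2 * level m n c"
    using alg_eq_wc_snoc_D double_area_from_snoc[of 0 "wc m n c" D] height_wc by simp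
  then show ?thesis
    using Area_eq_double_area_from[of "wc m n c"] by simp
qed

lemma height_take_wc:
  assumes "i \<le> m + n - 1"
  shows "height (take i (wc m n c)) = int i - int (arrivals top_stack i) - int (arrivals (snd c) i)"
proof -
  have "take i (wc m n c) = map xi_step (zip (take i upper_walk) (take i lower_walk))"
    using alg_eq_wc_snoc_D length_wc assms
    by (metis alg_eq_map_xi_step_walks take_append diff_is_0_eq' take0 append_Nil2 take_map take_zip)
  then have "height (take i (wc m n c))
      = int (count_list (take i upper_walk) N) - int (count_list (take i lower_walk) N)"
    using height_map_xi_step_zip[of "take i upper_walk" "take i lower_walk"]
      length_upper_walk length_lower_walk by simp
  moreover have "set (take i upper_walk) \<subseteq> {N, E}"
    using set_take_subset set_walk by (rule subset_trans)
  then have "length (take i upper_walk)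
      = count_list (take i upper_walk) N + count_list (take i upper_walk) E"
    using sum_count_set[of "take i upper_walk" "{N, E}"] by simp
  ultimately show ?thesis
    using length_upper_walk assms count_take_walk[OF _ sorted_top_stack, of N E i]
      count_take_walk[OF _ sorted_bottom, of E N i] by simp
qed

lemma count_UHE_wc: "length (filter (\<lambda>s. s = U \<or> s = HE) (wc m n c)) = m"
proof -
  have "length (butlast upper_walk) = length (butlast lower_walk)"
    using length_upper_walk length_lower_walk by simp
  then have "length (filter (\<lambda>s. s = U \<or> s = HE) (wc m n c)) = count_list (butlast lower_walk) E"
    unfolding wc_eq_map_xi_step by (rule count_UHE_map_xi_step_zip)
  also have "\<dots> = count_list (butlast lower_walk @ [last lower_walk]) E"
    using last_walk[OF bottom_ne] by simp
  also have "\<dots> = count_list lower_walk E"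
    using bottom_ne by simp
  also have "\<dots> = m"
    using count_walk_a[OF _ sorted_bottom bottom_ne] last_bottom by simp
  finally show ?thesis .
qed

lemma wc_in_Motz_iff: "wc m n c \<in> Motz m (n - 1) \<longleftrightarrow> prefix_condition m n c"
proof -
  have "m + n - 1 = m + (n - 1)"
    using n_pos by simp
  then have "wc m n c \<in> Motz m (n - 1) \<longleftrightarrow> (\<forall>k \<le> m + n - 1. 0 \<le> height (take k (wc m n c)))"
    unfolding Motz_def is_motzkin_def by (simp add: count_UHE_wc length_wc height_wc)
  moreover have "0 \<le> int k - int a - int b \<longleftrightarrow> a + b \<le> k" for a b k
    by arith
  ultimately show ?thesis
    unfolding prefix_condition_def by (simp add: height_take_wc)
qed

lemma no_forbidden_subconfig_iff_wc_in_Motz: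
  "no_forbidden_subconfig m n c \<longleftrightarrow> wc m n c \<in> Motz m (n - 1)"
  using no_forbidden_subconfig_iff_segments[OF stable_imp_wf_config[OF stable] sorted]
    prefix_condition_imp_segments segments_imp_prefix_condition wc_in_Motz_iff by blast

lemma sorted_recurrent_iff_wc_in_Motz: "c \<in> sorted_recurrent m n \<longleftrightarrow> wc m n c \<in> Motz m (n - 1)"
  using det_recurrent_iff_no_forbidden_subconfig[OF n_pos] no_forbidden_subconfig_iff_wc_in_Motz
    stable sorted unfolding sorted_recurrent_def by simp

end

lemma sorted_recurrent_imp_path_config:
  assumes "1 \<le> n" "c \<in> sorted_recurrent m n"
  shows "path_config m n c"
proof -
  have stable: "stable m n c" and nf: "no_forbidden_subconfig m n c" and sorted: "sorted_config c"
    using assms det_recurrent_iff_no_forbidden_subconfig[OF assms(1)]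
    unfolding sorted_recurrent_def by auto
  have len: "length (fst c) = m" "length (snd c) = n"
    using stable by (auto simp: stable_def wf_config_def)
  have "last (snd c) = snd c ! (n - 1)"
    using len assms(1) by (subst last_conv_nth) auto
  moreover have "snd c ! (n - 1) \<le> m"
    using stable_entries_le(2)[OF stable] len assms(1) by (auto simp: nth_mem)
  moreover have "m \<le> snd c ! (n - 1)" if "0 < m"
  proof -
    have "m - 1 < m" "0 < n"
      using that assms(1) by simp_all
    then have "fst c ! (m - 1) < n"
      using stable unfolding stable_def by blast
    moreover have "no_forbidden_segments m n c"
      using no_forbidden_subconfig_imp_segments[OF stable_imp_wf_config[OF stable] sorted nf] .
    then have "n \<le> fst c ! (m - 1) \<or> m \<le> snd c ! (n - 1)"
      by (rule no_forbidden_segmentsD[OF _ that order.refl \<open>0 < n\<close> order.refl])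
    ultimately show ?thesis
      by linarith
  qed
  ultimately have "last (snd c) = m"
    by (cases "m = 0") auto
  then show ?thesis
    using assms(1) stable sorted by unfold_locales
qed

section \<open>The inverse map\<close>

fun upper_step :: "mstep \<Rightarrow> lstep" where
  "upper_step U = N" | "upper_step HN = N" | "upper_step HE = E" | "upper_step D = E"

fun lower_step :: "mstep \<Rightarrow> lstep" where
  "lower_step U = E" | "lower_step HN = N" | "lower_step HE = E" | "lower_step D = N"

lemma upper_step_xi_step [simp]: "upper_step (xi_step p) = fst p"
  by (cases p rule: xi_step.cases) auto

lemma lower_step_xi_step [simp]: "lower_step (xi_step p) = snd p"
  by (cases p rule: xi_step.cases) auto

lemma map_xi_step_zip_steps: "map xi_step (zip (map upper_step w) (map lower_step w)) = w"
proof (induction w)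
  case (Cons s w)
  then show ?case by (cases s) auto
qed simp

lemma length_eq_count_msteps:
  "length w = count_list w U + count_list w D + count_list w HN + count_list w HE"
proof (induction w)
  case (Cons s w)
  then show ?case by (cases s) auto
qed simp

lemma height_eq_count_msteps: "height w = int (count_list w U) - int (count_list w D)"
proof (induction w)
  case (Cons s w)
  then show ?case by (cases s) auto
qed simp

lemma count_UHE_eq_count_msteps:
  "length (filter (\<lambda>s. s = U \<or> s = HE) w) = count_list w U + count_list w HE"
proof (induction w)
  case (Cons s w)
  then show ?case by (cases s) auto
qed simp

lemma count_upper_step_E: "count_list (map upper_step w) E = count_list w HE + count_list w D"
proof (induction w)
  case (Cons s w)
  then show ?case by (cases s) auto
qed simp

lemma count_lower_step_N: "count_list (map lower_step w) N = count_list w HN + count_list w D"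
proof (induction w)
  case (Cons s w)
  then show ?case by (cases s) auto
qed simp

text \<open>The inverse of \<open>wc\<close>: the steps of \<open>w D\<close> split into the two boundary paths, from which
  \<open>counts_before\<close> reads off the stacks \<open>T\<close> and \<open>B\<close>.\<close>

definition config_of_word :: "mstep list \<Rightarrow> config" where
  "config_of_word w = (butlast (counts_before E (map upper_step (w @ [D]))),
                       counts_before N (map lower_step (w @ [D])))"

lemma (in path_config) config_of_word_wc: "config_of_word (wc m n c) = c"
proof -
  have lengths: "length upper_walk = length lower_walk"
    using length_upper_walk length_lower_walk by simp
  have word: "wc m n c @ [D] = map xi_step (zip upper_walk lower_walk)"
    using alg_eq_wc_snoc_D alg_eq_map_xi_step_walks by simp
  have "map upper_step (wc m n c @ [D]) = upper_walk"
    unfolding word using lengths by (simp add: comp_def)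
  moreover have "map lower_step (wc m n c @ [D]) = lower_walk"
    unfolding word using lengths by (simp add: comp_def)
  ultimately show ?thesis
    unfolding config_of_word_def
    using counts_before_walk[OF _ sorted_top_stack] counts_before_walk[OF _ sorted_bottom] by simp
qed

lemma Motz_step_counts:
  assumes "w \<in> Motz m k"
  shows "length (map upper_step (w @ [D])) = (m + 1) + k" "count_list (map upper_step (w @ [D])) E = m + 1"
    and "length (map lower_step (w @ [D])) = (k + 1) + m" "count_list (map lower_step (w @ [D])) N = k + 1"
proof -
  have "length w = m + k" "count_list w U + count_list w HE = m" "count_list w U = count_list w D"
    using assms height_eq_count_msteps[of w] count_UHE_eq_count_msteps[of w]
    unfolding Motz_def is_motzkin_def by auto
  then show "length (map upper_step (w @ [D])) = (m + 1) + k" "count_list (map upper_step (w @ [D])) E = m + 1"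
    "length (map lower_step (w @ [D])) = (k + 1) + m" "count_list (map lower_step (w @ [D])) N = k + 1"
    using length_eq_count_msteps[of w] count_upper_step_E[of w] count_lower_step_N[of w] by auto
qed

lemma counts_before_path:
  fixes s :: "lstep list"
  assumes "a \<noteq> b" "s \<noteq> []" "last s = b" "length s = k + l" "count_list s b = k"
  shows "length (counts_before b s) = k" "last (counts_before b s) = l"
    "\<forall>x\<in>set (counts_before b s). x \<le> l" "walk a b (counts_before b s) = s"
proof -
  have set: "set s \<subseteq> {a, b}"
    using assms(1) by (cases a; cases b) (auto intro: lstep.exhaust)
  show "length (counts_before b s) = k"
    using assms(5) by (simp add: length_counts_before)
  show "last (counts_before b s) = l"
    using last_counts_before[OF assms(1) set assms(2,3)] assms(4,5) by simp
  show "\<forall>x\<in>set (counts_before b s). x \<le> l"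
    using counts_before_le[OF assms(1) set assms(2,3)] assms(4,5) by simp
  show "walk a b (counts_before b s) = s"
    using walk_counts_before[OF assms(1) set assms(2,3)] .
qed

lemma config_of_word_Motz:
  assumes "1 \<le> n" "w \<in> Motz m (n - 1)"
  shows "path_config m n (config_of_word w)" "wc m n (config_of_word w) = w"
proof -
  define su sl where "su = map upper_step (w @ [D])" and "sl = map lower_step (w @ [D])"
  define T B where "T = counts_before E su" and "B = counts_before N sl"
  have T: "length T = m + 1" "last T = n - 1" "\<forall>x\<in>set T. x \<le> n - 1" "walk N E T = su"
    using counts_before_path[of N E su "m + 1" "n - 1"] Motz_step_counts(1,2)[OF assms(2)]
    unfolding T_def su_def by auto
  have B: "length B = n" "last B = m" "\<forall>x\<in>set B. x \<le> m" "walk E N B = sl"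
    using counts_before_path[of E N sl n m] Motz_step_counts(3,4)[OF assms(2)] assms(1)
    unfolding B_def sl_def by auto
  have T_snoc: "butlast T @ [n - 1] = T"
    using T(1,2) append_butlast_last_id[of T] by force
  have "stable m n (butlast T, B)"
    unfolding stable_def wf_config_def
  proof (intro conjI allI impI)
    fix i assume "i < m"
    then have "butlast T ! i \<in> set T"
      using T(1) by (simp add: nth_butlast)
    then show "fst (butlast T, B) ! i < n"
      using T(3) assms(1) by fastforce
  next
    fix j assume "j < n"
    then have "B ! j \<in> set B"
      using B(1) by simp
    then show "snd (butlast T, B) ! j < m + 1"
      using B(3) by fastforce
  qed (use T(1) B(1) in simp_all)
  moreover have "sorted_config (butlast T, B)"
    unfolding sorted_config_def T_def B_def by (simp add: sorted_counts_before sorted_butlast)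
  ultimately show "path_config m n (config_of_word w)"
    using assms(1) B(2) unfolding config_of_word_def su_def sl_def T_def B_def
    by unfold_locales simp_all
  have "wc m n (butlast T, B) = butlast (map xi_step (zip su sl))"
    unfolding wc_def using T_snoc T(4) B(4) by (simp add: alg_eq_map_xi_step_walks)
  then show "wc m n (config_of_word w) = w"
    unfolding config_of_word_def su_def sl_def T_def B_def by (simp add: map_xi_step_zip_steps)
qed

lemma inj_on_wc: "1 \<le> n \<Longrightarrow> inj_on (wc m n) (sorted_recurrent m n)"
  using sorted_recurrent_imp_path_config path_config.config_of_word_wc by (metis inj_onI)

lemma image_wc_sorted_recurrent:
  assumes "1 \<le> n"
  shows "wc m n ` sorted_recurrent m n = Motz m (n - 1)"
proof
  show "wc m n ` sorted_recurrent m n \<subseteq> Motz m (n - 1)"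
    using sorted_recurrent_imp_path_config[OF assms] path_config.sorted_recurrent_iff_wc_in_Motz
    by blast
  show "Motz m (n - 1) \<subseteq> wc m n ` sorted_recurrent m n"
  proof
    fix w assume w: "w \<in> Motz m (n - 1)"
    then have "config_of_word w \<in> sorted_recurrent m n"
      using config_of_word_Motz[OF assms w] path_config.sorted_recurrent_iff_wc_in_Motz by metis
    then show "w \<in> wc m n ` sorted_recurrent m n"
      using config_of_word_Motz(2)[OF assms w] by (metis image_eqI)
  qed
qed

theorem theorem4p16:
  fixes m n :: nat
  assumes "1 \<le> n"
  shows "(\<forall>c \<in> sorted_recurrent m n.
            wc m n c = Xi (Phi m n c) \<and> of_int (level m n c) = Area (wc m n c))
         \<and> bij_betw (wc m n) (sorted_recurrent m n) (Motz m (n - 1))"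
proof -
  have "wc m n c = Xi (Phi m n c) \<and> of_int (level m n c) = Area (wc m n c)"
    if "c \<in> sorted_recurrent m n" for c
    using sorted_recurrent_imp_path_config[OF assms that]
    by (simp add: path_config.wc_eq_Xi_Phi path_config.level_eq_Area)
  then show ?thesis
    using inj_on_wc[OF assms] image_wc_sorted_recurrent[OF assms] unfolding bij_betw_def by blast
qed

end
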